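(* Let $G$ be a bridgeless non-bipartite cubic graph and let $g$ be its odd-girth. Then $$\phi_{\mathbb{C}}(G) \geq \begin{cases} 1 + 2\sin\left(\frac{\pi}{6}\cdot\frac{g}{g-1}\right) & \text{if } g \equiv 1 \text{ or } 3 \pmod 6,\\ 1 + 2\sin\left(\frac{\pi}{6}\cdot\frac{g+1}{g}\right) & \text{if } g \equiv 5 \pmod 6.\end{cases}$$
   Context: The odd-girth of a non-bipartite graph is the length of a shortest odd cycle in it. For a real number $r \geq 2$, a complex nowhere-zero $r$-flow on a graph $G$ is an orientation of $G$ together with a map $\varphi\colon E(G)\to\mathbb{C}$ such that $1 \le |\varphi(e)| \le r-1$ for every edge $e$ and, at every vertex, the sum of the values on incoming edges equals the sum of the values on outgoing edges. For a bridgeless graph $G$, the complex flow number $\phi_{\mathbb{C}}(G)$ is the minimum (equivalently infimum; it is attained) of the real numbers $r\ge 2$ such that $G$ admits a complex nowhere-zero $r$-flow. *)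

theory Defs
  imports "HOL-Analysis.Analysis"
begin

text \<open>A finite multigraph (parallel edges and loops allowed) is given by a vertex set V,
  an edge set E and a map ends assigning to each edge its two (unordered) endpoints,
  listed in an arbitrary reference order.\<close>

definition graph :: "'v set \<Rightarrow> 'e set \<Rightarrow> ('e \<Rightarrow> 'v \<times> 'v) \<Rightarrow> bool" where
  "graph V E ends \<longleftrightarrow> finite V \<and> finite E \<and>
     (\<forall>e\<in>E. fst (ends e) \<in> V \<and> snd (ends e) \<in> V)"

definition degree :: "'e set \<Rightarrow> ('e \<Rightarrow> 'v \<times> 'v) \<Rightarrow> 'v \<Rightarrow> nat" where
  "degree E ends v = card {e\<in>E. fst (ends e) = v} + card {e\<in>E. snd (ends e) = v}"

definition cubic :: "'v set \<Rightarrow> 'e set \<Rightarrow> ('e \<Rightarrow> 'v \<times> 'v) \<Rightarrow> bool" where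
  "cubic V E ends \<longleftrightarrow> graph V E ends \<and> (\<forall>v\<in>V. degree E ends v = 3)"

definition adj :: "'e set \<Rightarrow> ('e \<Rightarrow> 'v \<times> 'v) \<Rightarrow> ('v \<times> 'v) set" where
  "adj F ends = {(x, y). \<exists>e\<in>F. ends e = (x, y) \<or> ends e = (y, x)}"

definition is_bridge :: "'e set \<Rightarrow> ('e \<Rightarrow> 'v \<times> 'v) \<Rightarrow> 'e \<Rightarrow> bool" where
  "is_bridge E ends e \<longleftrightarrow> e \<in> E \<and> ends e \<notin> (adj (E - {e}) ends)\<^sup>*"

definition bridgeless :: "'e set \<Rightarrow> ('e \<Rightarrow> 'v \<times> 'v) \<Rightarrow> bool" where
  "bridgeless E ends \<longleftrightarrow> (\<forall>e\<in>E. \<not> is_bridge E ends e)"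

definition bipartite :: "'v set \<Rightarrow> 'e set \<Rightarrow> ('e \<Rightarrow> 'v \<times> 'v) \<Rightarrow> bool" where
  "bipartite V E ends \<longleftrightarrow>
     (\<exists>A\<subseteq>V. \<forall>e\<in>E. (fst (ends e) \<in> A) \<noteq> (snd (ends e) \<in> A))"

definition has_cycle :: "'e set \<Rightarrow> ('e \<Rightarrow> 'v \<times> 'v) \<Rightarrow> nat \<Rightarrow> bool" where
  "has_cycle E ends k \<longleftrightarrow> k \<ge> 1 \<and>
     (\<exists>vs :: nat \<Rightarrow> 'v. \<exists>es :: nat \<Rightarrow> 'e.
        inj_on vs {..<k} \<and> inj_on es {..<k} \<and>
        (\<forall>i<k. es i \<in> E \<and>
           (ends (es i) = (vs i, vs (Suc i mod k)) \<or> ends (es i) = (vs (Suc i mod k), vs i))))"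

definition odd_girth :: "'e set \<Rightarrow> ('e \<Rightarrow> 'v \<times> 'v) \<Rightarrow> nat" where
  "odd_girth E ends = (LEAST k. odd k \<and> has_cycle E ends k)"

definition head :: "('e \<Rightarrow> 'v \<times> 'v) \<Rightarrow> ('e \<Rightarrow> bool) \<Rightarrow> 'e \<Rightarrow> 'v" where
  "head ends ori e = (if ori e then snd (ends e) else fst (ends e))"

definition tail :: "('e \<Rightarrow> 'v \<times> 'v) \<Rightarrow> ('e \<Rightarrow> bool) \<Rightarrow> 'e \<Rightarrow> 'v" where
  "tail ends ori e = (if ori e then fst (ends e) else snd (ends e))"

definition complex_nz_flow ::
  "'v set \<Rightarrow> 'e set \<Rightarrow> ('e \<Rightarrow> 'v \<times> 'v) \<Rightarrow> real \<Rightarrow> ('e \<Rightarrow> bool) \<Rightarrow> ('e \<Rightarrow> complex) \<Rightarrow> bool" where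
  "complex_nz_flow V E ends r ori \<phi> \<longleftrightarrow>
     (\<forall>e\<in>E. 1 \<le> cmod (\<phi> e) \<and> cmod (\<phi> e) \<le> r - 1) \<and>
     (\<forall>v\<in>V. (\<Sum>e\<in>{e\<in>E. head ends ori e = v}. \<phi> e) = (\<Sum>e\<in>{e\<in>E. tail ends ori e = v}. \<phi> e))"

definition complex_flow_number :: "'v set \<Rightarrow> 'e set \<Rightarrow> ('e \<Rightarrow> 'v \<times> 'v) \<Rightarrow> real" where
  "complex_flow_number V E ends =
     Inf {r. r \<ge> 2 \<and> (\<exists>ori \<phi>. complex_nz_flow V E ends r ori \<phi>)}"

end

theory Submission
  imports Defs
begin

(* Let C be a shortest odd cycle, of length g, traversed cyclically. The values f_0, ..., f_(g-1)
   of a complex nowhere-zero r-flow on the edges of C satisfy 1 <= |f_i| <= r - 1, and since G is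
   cubic, f_(i+1) - f_i is, up to sign, the value on the third edge at the common vertex; so the
   f_i form a closed polygon whose vertices and sides have length in [1, R], R = r - 1.
   The claimed bounds on R are at most 2 sin (pi/4), so we may write R = 2 sin x with
   pi/6 <= x <= pi/4; let a_i = arcsin (sin x / |f_i|). The law of cosines bounds the turning
   angles t_i = Arg (f_(i+1) / f_i) by
     a_i + a_(i+1) - 2 (x - pi/6) <= |t_i| <= a_i + a_(i+1).
   The t_i add up to a multiple of 2 pi and g is odd, so the sum of 3 t_i - pi sgn t_i is an odd
   multiple of pi; on the other hand, distributing the bounds on t_i over the vertices shows that
   its absolute value is at most 6 g (x - pi/6), and at most 6 (g - 1) (x - pi/6) when the t_i
   change sign. This gives the bound for g = 5 (mod 6). For g = 1, 3 (mod 6) it remains to treat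
   turning angles of constant sign: then g = 1 (mod 6), the |t_i| add up to pi (g - 1) / 3, and
   the law of cosines at a vertex with |t_i| <= pi (g - 1) / (3 g) gives the bound. *)

section \<open>Distances and angles in the plane\<close>

lemma cmod_diff_power2_cos_Arg:
  fixes P Q :: complex
  assumes "P \<noteq> 0" "Q \<noteq> 0"
  shows "(cmod (P - Q))\<^sup>2 = (cmod P)\<^sup>2 + (cmod Q)\<^sup>2 - 2 * cmod P * cmod Q * cos (Arg (Q / P))"
proof -
  have "(cmod (P - Q))\<^sup>2 = (cmod P)\<^sup>2 + (cmod Q)\<^sup>2 - 2 * Re (Q * cnj P)"
    unfolding cmod_power2 by (simp add: power2_eq_square algebra_simps)
  moreover have "Re (Q * cnj P) = cmod P * cmod Q * cos (Arg (Q / P))"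
  proof -
    have "Q * cnj P = (Q / P) * (P * cnj P)"
      using assms by simp
    also have "P * cnj P = of_real ((cmod P)\<^sup>2)"
      by (rule complex_norm_square[symmetric])
    also have "Q / P = rcis (cmod (Q / P)) (Arg (Q / P))"
      by (rule rcis_cmod_Arg[symmetric])
    finally show ?thesis
      using assms by (simp add: norm_divide power2_eq_square field_simps)
  qed
  ultimately show ?thesis by simp
qed

lemma cmod_rcis_diff_power2:
  "(cmod (rcis A a - rcis B b))\<^sup>2 = A\<^sup>2 + B\<^sup>2 - 2 * A * B * cos (a - b)"
proof -
  have "(cmod (rcis A a - rcis B b))\<^sup>2 = (A * cos a - B * cos b)\<^sup>2 + (A * sin a - B * sin b)\<^sup>2"
    by (simp add: cmod_power2)
  also have "\<dots> = A\<^sup>2 + B\<^sup>2 - 2 * A * B * (cos a * cos b + sin a * sin b)"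
    using sin_cos_squared_add3[of a] sin_cos_squared_add3[of b] by algebra
  finally show ?thesis by (simp add: cos_diff)
qed

lemma abs_Arg_le_pi: "\<bar>Arg z\<bar> \<le> pi"
  using Arg_bounded[of z] by linarith

lemma abs_Arg_div_le:
  fixes P Q :: complex
  assumes "P \<noteq> 0" "Q \<noteq> 0" "0 \<le> t" "t \<le> pi"
    and "(cmod (P - Q))\<^sup>2 \<le> (cmod P)\<^sup>2 + (cmod Q)\<^sup>2 - 2 * cmod P * cmod Q * cos t"
  shows "\<bar>Arg (Q / P)\<bar> \<le> t"
proof -
  have "cmod P * cmod Q * cos t \<le> cmod P * cmod Q * cos \<bar>Arg (Q / P)\<bar>"
    using assms(5) cmod_diff_power2_cos_Arg[OF assms(1,2)] by simp
  then have "cos t \<le> cos \<bar>Arg (Q / P)\<bar>"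
    using assms(1,2) by (simp add: mult_le_cancel_left_pos)
  then show ?thesis
    using assms(3,4) abs_Arg_le_pi cos_mono_le_eq[of t "\<bar>Arg (Q / P)\<bar>"] by simp
qed

lemma abs_Arg_div_ge:
  fixes P Q :: complex
  assumes "P \<noteq> 0" "Q \<noteq> 0" "0 \<le> t" "t \<le> pi"
    and "(cmod P)\<^sup>2 + (cmod Q)\<^sup>2 - 2 * cmod P * cmod Q * cos t \<le> (cmod (P - Q))\<^sup>2"
  shows "t \<le> \<bar>Arg (Q / P)\<bar>"
proof -
  have "cmod P * cmod Q * cos \<bar>Arg (Q / P)\<bar> \<le> cmod P * cmod Q * cos t"
    using assms(5) cmod_diff_power2_cos_Arg[OF assms(1,2)] by simp
  then have "cos \<bar>Arg (Q / P)\<bar> \<le> cos t"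
    using assms(1,2) by (simp add: mult_le_cancel_left_pos)
  then show ?thesis
    using assms(3,4) abs_Arg_le_pi cos_mono_le_eq[of "\<bar>Arg (Q / P)\<bar>" t] by simp
qed

lemma arcsin_sin_div_bounds:
  assumes "pi/6 \<le> x" "x \<le> pi/2" "1 \<le> a" "a \<le> 2 * sin x"
  shows "pi/6 \<le> arcsin (sin x / a)" "arcsin (sin x / a) \<le> x"
proof -
  have "0 < sin x" using assms(1,2) pi_gt_zero by (intro sin_gt_zero) linarith+
  then have le: "1/2 \<le> sin x / a" "sin x / a \<le> sin x"
    using assms(3,4) by (simp_all add: le_divide_eq divide_le_eq mult_le_cancel_left1)
  have "sin x \<le> 1" by simp
  have "arcsin (1/2) \<le> arcsin (sin x / a)"
    using le \<open>sin x \<le> 1\<close> by (intro arcsin_le_arcsin) linarith+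
  then show "pi/6 \<le> arcsin (sin x / a)" by simp
  have "arcsin (sin x / a) \<le> arcsin (sin x)"
    using le \<open>sin x \<le> 1\<close> by (intro arcsin_le_arcsin) linarith+
  also have "\<dots> = x" using assms(1,2) pi_gt_zero by (intro arcsin_sin) linarith+
  finally show "arcsin (sin x / a) \<le> x" .
qed

lemma rcis_arcsin_div:
  assumes "\<bar>s\<bar> \<le> a"
  shows "rcis a (arcsin (s / a)) = Complex (sqrt (a\<^sup>2 - s\<^sup>2)) s"
proof (cases "a = 0")
  case False
  then have a: "0 < a" using assms abs_ge_zero[of s] by linarith
  then have bounds: "-1 \<le> s / a" "s / a \<le> 1" using assms by (simp_all add: abs_le_iff field_simps)
  have "a * cos (arcsin (s / a)) = sqrt (a\<^sup>2) * sqrt (1 - (s / a)\<^sup>2)"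
    using a bounds by (simp add: cos_arcsin)
  also have "\<dots> = sqrt (a\<^sup>2 * (1 - (s / a)\<^sup>2))" by (simp only: real_sqrt_mult)
  also have "a\<^sup>2 * (1 - (s / a)\<^sup>2) = a\<^sup>2 - s\<^sup>2" using a by (simp add: field_simps)
  finally show ?thesis using a bounds by (simp add: rcis_def complex_eq_iff)
qed (use assms in \<open>simp add: complex_eq_iff\<close>)

lemma abs_Arg_div_le_arcsin_sum:
  fixes P Q :: complex
  assumes x: "pi/6 \<le> x" "x \<le> pi/4"
    and P: "1 \<le> cmod P" "cmod P \<le> 2 * sin x" and Q: "1 \<le> cmod Q" "cmod Q \<le> 2 * sin x"
    and PQ: "cmod (P - Q) \<le> 2 * sin x"
  shows "\<bar>Arg (Q / P)\<bar> \<le> arcsin (sin x / cmod P) + arcsin (sin x / cmod Q)"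
proof -
  define a b s where "a = cmod P" and "b = cmod Q" and "s = sin x"
  define la lb where "la = arcsin (s / a)" and "lb = arcsin (s / b)"
  have s: "0 < s" "s \<le> 1"
    unfolding s_def using x pi_gt_zero by (intro sin_gt_zero, linarith+, simp)
  have bounds: "pi/6 \<le> la" "la \<le> x" "pi/6 \<le> lb" "lb \<le> x"
    using arcsin_sin_div_bounds x P Q by (simp_all add: la_def lb_def a_def b_def s_def)
  have sa: "s\<^sup>2 \<le> a\<^sup>2" "s\<^sup>2 \<le> b\<^sup>2" using s P Q by (auto simp: a_def b_def intro!: power_mono)
  have "rcis a la = Complex (sqrt (a\<^sup>2 - s\<^sup>2)) s" "rcis b lb = Complex (sqrt (b\<^sup>2 - s\<^sup>2)) s"
    using rcis_arcsin_div s P Q by (simp_all add: la_def lb_def a_def b_def)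
  then have "a * cos la = sqrt (a\<^sup>2 - s\<^sup>2)" "a * sin la = s"
    "b * cos lb = sqrt (b\<^sup>2 - s\<^sup>2)" "b * sin lb = s"
    by (simp_all add: complex_eq_iff rcis_def)
  then have "a * b * cos (la + lb) = sqrt (a\<^sup>2 - s\<^sup>2) * sqrt (b\<^sup>2 - s\<^sup>2) - s\<^sup>2"
    unfolding cos_add by (metis (no_types) mult.commute mult.left_commute power2_eq_square right_diff_distrib)
  also have "\<dots> \<le> (a\<^sup>2 + b\<^sup>2) / 2 - 2 * s\<^sup>2"
    using arith_geo_mean_sqrt[of "a\<^sup>2 - s\<^sup>2" "b\<^sup>2 - s\<^sup>2"] sa by (simp add: real_sqrt_mult)
  finally have "a * b * cos (la + lb) \<le> (a\<^sup>2 + b\<^sup>2) / 2 - 2 * s\<^sup>2" .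
  moreover have "(cmod (P - Q))\<^sup>2 \<le> 4 * s\<^sup>2"
    using power_mono[OF PQ norm_ge_zero, of 2] by (simp add: s_def power_mult_distrib)
  ultimately have "(cmod (P - Q))\<^sup>2 \<le> a\<^sup>2 + b\<^sup>2 - 2 * a * b * cos (la + lb)"
    by (simp add: field_simps)
  then show ?thesis
    using P Q bounds x pi_gt_zero
    by (intro abs_Arg_div_le) (auto simp: a_def b_def la_def lb_def s_def)
qed

lemma norm_affine_le_endpoints:
  fixes A B :: "'a::real_normed_vector"
  assumes "l \<le> t" "t \<le> h" "norm (A + l *\<^sub>R B) \<le> M" "norm (A + h *\<^sub>R B) \<le> M"
  shows "norm (A + t *\<^sub>R B) \<le> M"
proof (cases "l = h")
  case True
  then show ?thesis using assms by (metis order_antisym)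
next
  case False
  then have lh: "l < h" using assms by linarith
  define p q where "p = (h - t) / (h - l)" and "q = (t - l) / (h - l)"
  have pq: "0 \<le> p" "0 \<le> q" "p + q = 1"
    using assms lh by (simp_all add: p_def q_def add_divide_distrib[symmetric])
  have "A + t *\<^sub>R B = p *\<^sub>R (A + l *\<^sub>R B) + q *\<^sub>R (A + h *\<^sub>R B)"
  proof -
    have "p * l + q * h = ((h - t) * l + (t - l) * h) / (h - l)"
      by (simp add: p_def q_def add_divide_distrib)
    also have "(h - t) * l + (t - l) * h = t * (h - l)" by (simp add: algebra_simps)
    finally have "p * l + q * h = t" using lh by simp
    then show ?thesis
      using pq(3) by (simp add: algebra_simps flip: scaleR_add_left)
  qed
  also have "norm \<dots> \<le> p * M + q * M"
    using pq assms(3,4) by (intro norm_triangle_le add_mono) (auto intro: mult_left_mono)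
  also have "\<dots> = M" using pq(3) by (simp flip: distrib_right)
  finally show ?thesis .
qed

lemma sqrt_diff_sin_bounds:
  assumes "0 \<le> x" "x \<le> pi/2" "1 \<le> a" "a \<le> 2 * sin x"
  shows "cos x \<le> sqrt (a\<^sup>2 - (sin x)\<^sup>2)" "sqrt (a\<^sup>2 - (sin x)\<^sup>2) \<le> sqrt 3 * sin x"
proof -
  have "0 \<le> sin x" "0 \<le> cos x" using assms pi_gt_zero by (auto intro!: sin_ge_zero cos_ge_zero)
  have "cos x = sqrt (1 - (sin x)\<^sup>2)"
    using \<open>0 \<le> cos x\<close> by (simp add: cos_squared_eq[symmetric])
  also have "\<dots> \<le> sqrt (a\<^sup>2 - (sin x)\<^sup>2)" using assms(3) by (simp add: one_le_power)
  finally show "cos x \<le> sqrt (a\<^sup>2 - (sin x)\<^sup>2)" .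
  have "a\<^sup>2 \<le> (2 * sin x)\<^sup>2" using assms(3,4) by (intro power_mono) auto
  then have "sqrt (a\<^sup>2 - (sin x)\<^sup>2) \<le> sqrt (3 * (sin x)\<^sup>2)" by (simp add: power_mult_distrib)
  also have "\<dots> = sqrt 3 * sin x" using \<open>0 \<le> sin x\<close> by (simp add: real_sqrt_mult)
  finally show "sqrt (a\<^sup>2 - (sin x)\<^sup>2) \<le> sqrt 3 * sin x" .
qed

lemma cmod_rcis_diff_cnj: "cmod (rcis r a - cnj (rcis r a)) = 2 * \<bar>r * sin a\<bar>"
proof -
  have "rcis r a - cnj (rcis r a) = of_real (2 * (r * sin a)) * \<i>"
    by (simp add: complex_eq_iff)
  then show ?thesis by (simp add: norm_mult abs_mult)
qed

lemma cmod_rcis_diff_cnj_le_1: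
  assumes x: "pi/6 \<le> x" "x \<le> pi/3"
  shows "cmod (rcis (2 * sin x) (pi/3 - x) - cnj (rcis (2 * sin x) (pi/3 - x))) \<le> 1"
proof -
  have "0 \<le> sin x" "0 \<le> sin (pi/3 - x)"
    using x pi_gt_zero by (intro sin_ge_zero; argo)+
  then have "cmod (rcis (2 * sin x) (pi/3 - x) - cnj (rcis (2 * sin x) (pi/3 - x)))
      = 4 * sin x * sin (pi/3 - x)"
    by (simp add: cmod_rcis_diff_cnj)
  also have "\<dots> = 2 * sqrt 3 * sin x * cos x - 2 * (sin x)\<^sup>2"
    by (simp add: sin_diff sin_60 cos_60 power2_eq_square algebra_simps)
  also have "\<dots> \<le> 1"
  proof -
    have "0 \<le> (cos x - sqrt 3 * sin x)\<^sup>2" by simp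
    also have "\<dots> = 1 + 2 * (sin x)\<^sup>2 - 2 * sqrt 3 * sin x * cos x"
      by (simp add: power2_diff power_mult_distrib cos_squared_eq algebra_simps)
    finally show ?thesis by simp
  qed
  finally show ?thesis .
qed

lemma cmod_corner_diff_cnj_le_1:
  assumes x: "pi/6 \<le> x" "x \<le> pi/4"
    and P: "P \<in> {cis (pi/6), rcis (2 * sin x) (pi/3 - x)}"
    and Q: "Q \<in> {cis (pi/6), rcis (2 * sin x) (pi/3 - x)}"
  shows "cmod (P - cnj Q) \<le> 1"
proof -
  define s where "s = sin x"
  have cnj_rcis: "cnj (rcis r a) = rcis r (- a)" for r a by (simp add: rcis_def cis_cnj)
  have mixed: "1 + (2 * s)\<^sup>2 - 2 * 1 * (2 * s) * cos (pi/2 - x) = 1"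
    by (simp add: s_def cos_diff power2_eq_square)
  have le_1: "cmod z \<le> 1" if "(cmod z)\<^sup>2 = 1" for z :: complex
    using that by (simp add: abs_square_eq_1)
  consider "P = rcis 1 (pi/6)" "Q = rcis 1 (pi/6)"
    | "P = rcis 1 (pi/6)" "Q = rcis (2 * s) (pi/3 - x)"
    | "P = rcis (2 * s) (pi/3 - x)" "Q = rcis 1 (pi/6)"
    | "P = rcis (2 * s) (pi/3 - x)" "Q = rcis (2 * s) (pi/3 - x)"
    using P Q by (auto simp: s_def rcis_def)
  then show ?thesis
  proof cases
    case 1
    then have "(cmod (P - cnj Q))\<^sup>2 = 1" by (simp add: cnj_rcis cmod_rcis_diff_power2 cos_60)
    then show ?thesis by (rule le_1)
  next
    case 2
    then have "(cmod (P - cnj Q))\<^sup>2 = 1 + (2 * s)\<^sup>2 - 2 * 1 * (2 * s) * cos (pi/6 - - (pi/3 - x))"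
      by (simp only: cnj_rcis cmod_rcis_diff_power2 one_power2)
    also have "pi/6 - - (pi/3 - x) = pi/2 - x" by simp
    finally show ?thesis using mixed le_1 by simp
  next
    case 3
    then have "(cmod (P - cnj Q))\<^sup>2 = (2 * s)\<^sup>2 + 1 - 2 * (2 * s) * 1 * cos (pi/3 - x - - (pi/6))"
      by (simp only: cnj_rcis cmod_rcis_diff_power2 one_power2)
    also have "pi/3 - x - - (pi/6) = pi/2 - x" by simp
    finally show ?thesis using mixed le_1 by (simp add: add.commute)
  next
    case 4
    then show ?thesis using cmod_rcis_diff_cnj_le_1[of x] x by (simp add: s_def)
  qed
qed

(* Affine in t and in u, so by convexity of the norm it suffices to check the four corners. *)
lemma cmod_diff_cnj_le_1:
  assumes x: "pi/6 \<le> x" "x \<le> pi/4"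
    and t: "cos x \<le> t" "t \<le> sqrt 3 * sin x" and u: "cos x \<le> u" "u \<le> sqrt 3 * sin x"
  shows "cmod (cis (pi/6 - x) * Complex t (sin x) - cnj (cis (pi/6 - x) * Complex u (sin x))) \<le> 1"
proof -
  define c where "c = cis (pi/6 - x)"
  define h where "h t = c * Complex t (sin x)" for t
  define K where "K = c * Complex 0 (sin x)"
  have h_affine: "h t = K + t *\<^sub>R c" for t
    by (simp add: h_def K_def complex_eq_iff)
  have corner: "h t \<in> {cis (pi/6), rcis (2 * sin x) (pi/3 - x)}"
    if "t = cos x \<or> t = sqrt 3 * sin x" for t
  proof -
    have "Complex (cos x) (sin x) = cis x" "Complex (sqrt 3 * sin x) (sin x) = rcis (2 * sin x) (pi/6)"
      by (simp_all add: complex_eq_iff rcis_def cos_30 sin_30)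
    moreover have "c * cis x = cis (pi/6)" "c * rcis (2 * sin x) (pi/6) = rcis (2 * sin x) (pi/3 - x)"
      by (simp_all add: c_def rcis_def cis_mult)
    ultimately show ?thesis using that by (auto simp: h_def)
  qed
  have edge: "cmod (h t - cnj (h u')) \<le> 1" if "u' = cos x \<or> u' = sqrt 3 * sin x" for u'
  proof -
    have "cmod ((K - cnj (h u')) + t' *\<^sub>R c) \<le> 1" if "t' = cos x \<or> t' = sqrt 3 * sin x" for t'
      using cmod_corner_diff_cnj_le_1[OF x corner[OF that] corner[of u']] \<open>u' = _ \<or> _\<close>
      by (simp add: h_affine[of t'] algebra_simps)
    then have "cmod ((K - cnj (h u')) + t *\<^sub>R c) \<le> 1"
      using t by (intro norm_affine_le_endpoints[of "cos x" t "sqrt 3 * sin x"]) auto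
    then show ?thesis by (simp add: h_affine[of t] algebra_simps)
  qed
  have split: "h t - cnj (h u') = (h t - cnj K) + u' *\<^sub>R (- cnj c)" for u'
    by (simp add: h_affine[of u'] scaleR_conv_of_real)
  have "cmod ((h t - cnj K) + u' *\<^sub>R (- cnj c)) \<le> 1" if "u' = cos x \<or> u' = sqrt 3 * sin x" for u'
    using edge[OF that] by (simp only: split)
  then have "cmod ((h t - cnj K) + u *\<^sub>R (- cnj c)) \<le> 1"
    using u by (intro norm_affine_le_endpoints[of "cos x" u "sqrt 3 * sin x"]) auto
  then show ?thesis by (simp only: split flip: h_def c_def)
qed

(* The points rcis a la and rcis b lb lie on the line Im z = sin x. After rotating both by -w,
   the first point and the conjugate of the second are at distance at most 1; they have moduli
   a and b and enclose the angle la + lb - 2 w, whereas P and Q are at distance at least 1. *)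
lemma abs_Arg_div_ge_arcsin_sum:
  fixes P Q :: complex
  assumes x: "pi/6 \<le> x" "x \<le> pi/4"
    and P: "1 \<le> cmod P" "cmod P \<le> 2 * sin x" and Q: "1 \<le> cmod Q" "cmod Q \<le> 2 * sin x"
    and PQ: "1 \<le> cmod (P - Q)"
  shows "arcsin (sin x / cmod P) + arcsin (sin x / cmod Q) - 2 * (x - pi/6) \<le> \<bar>Arg (Q / P)\<bar>"
proof -
  define a b s w where "a = cmod P" and "b = cmod Q" and "s = sin x" and "w = x - pi/6"
  define la lb where "la = arcsin (s / a)" and "lb = arcsin (s / b)"
  have s: "0 < s" "s \<le> 1"
    unfolding s_def using x pi_gt_zero by (intro sin_gt_zero, linarith+, simp)
  have bounds: "pi/6 \<le> la" "la \<le> x" "pi/6 \<le> lb" "lb \<le> x"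
    using arcsin_sin_div_bounds x P Q by (simp_all add: la_def lb_def a_def b_def s_def)
  have rotate: "rcis r (l - w) = cis (pi/6 - x) * rcis r l" for r l
  proof -
    have "l - w = (pi/6 - x) + l" by (simp add: w_def)
    then have "cis (l - w) = cis (pi/6 - x) * cis l" by (simp only: cis_mult)
    then show ?thesis by (simp add: rcis_def mult.left_commute)
  qed
  have "rcis a la = Complex (sqrt (a\<^sup>2 - s\<^sup>2)) s" "rcis b lb = Complex (sqrt (b\<^sup>2 - s\<^sup>2)) s"
    using rcis_arcsin_div s P Q by (simp_all add: la_def lb_def a_def b_def)
  moreover have "rcis b (w - lb) = cnj (rcis b (lb - w))"
    by (simp add: rcis_def cis_cnj)
  ultimately have "rcis a (la - w) = cis (pi/6 - x) * Complex (sqrt (a\<^sup>2 - s\<^sup>2)) s"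
    "rcis b (w - lb) = cnj (cis (pi/6 - x) * Complex (sqrt (b\<^sup>2 - s\<^sup>2)) s)"
    by (simp_all only: rotate)
  moreover have "cos x \<le> sqrt (a\<^sup>2 - s\<^sup>2)" "sqrt (a\<^sup>2 - s\<^sup>2) \<le> sqrt 3 * s"
    "cos x \<le> sqrt (b\<^sup>2 - s\<^sup>2)" "sqrt (b\<^sup>2 - s\<^sup>2) \<le> sqrt 3 * s"
    using sqrt_diff_sin_bounds x P Q pi_gt_zero by (simp_all add: a_def b_def s_def)
  ultimately have "cmod (rcis a (la - w) - rcis b (w - lb)) \<le> 1"
    using cmod_diff_cnj_le_1[OF x] by (simp add: s_def)
  then have "(cmod (rcis a (la - w) - rcis b (w - lb)))\<^sup>2 \<le> 1"
    by (simp add: power_le_one)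
  moreover have "la - w - (w - lb) = la + lb - 2 * w" by simp
  ultimately have "a\<^sup>2 + b\<^sup>2 - 2 * a * b * cos (la + lb - 2 * w) \<le> 1"
    by (simp only: cmod_rcis_diff_power2)
  moreover have "1 \<le> (cmod (P - Q))\<^sup>2" using PQ by (simp add: one_le_power)
  ultimately show ?thesis
    using P Q bounds x pi_gt_zero
    by (intro abs_Arg_div_ge) (auto simp: a_def b_def la_def lb_def s_def w_def)
qed

lemma sq_diff_add_mult_div_le_1:
  fixes a b R :: real
  assumes R: "1 \<le> R" "R\<^sup>2 \<le> 2" and "1 \<le> a" "a \<le> b" "b \<le> R"
  shows "(a - b)\<^sup>2 + a * b / R\<^sup>2 \<le> 1"
proof -
  have "a * b \<le> (R - (b - a)) * R" using assms(3-5) by (intro mult_mono) auto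
  then have "a * b / R\<^sup>2 \<le> 1 - (b - a) / R"
    using R by (simp add: power2_eq_square field_simps)
  moreover have "b - a \<le> 1 / R"
  proof -
    have "(R - 1) * R \<le> 1" using R by (simp add: power2_eq_square algebra_simps)
    then have "R - 1 \<le> 1 / R" using R by (simp add: field_simps)
    then show ?thesis using assms(3-5) by linarith
  qed
  then have "(b - a)\<^sup>2 \<le> (b - a) / R"
    using assms(3-5) mult_left_mono[of "b - a" "1 / R" "b - a"] by (simp add: power2_eq_square)
  ultimately show ?thesis using power2_commute[of a b] by linarith
qed

lemma cos_Arg_div_le:
  fixes P Q :: complex
  assumes R: "1 \<le> R" "R\<^sup>2 \<le> 2"
    and P: "1 \<le> cmod P" "cmod P \<le> R" and Q: "1 \<le> cmod Q" "cmod Q \<le> R"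
    and PQ: "1 \<le> cmod (P - Q)"
  shows "cos (Arg (Q / P)) \<le> 1 - 1 / (2 * R\<^sup>2)"
proof -
  define a b where "a = cmod P" and "b = cmod Q"
  have "(a - b)\<^sup>2 + a * b / R\<^sup>2 \<le> 1"
    using sq_diff_add_mult_div_le_1[OF R, of a b] sq_diff_add_mult_div_le_1[OF R, of b a] P Q
    by (cases "a \<le> b") (auto simp: a_def b_def power2_commute mult.commute)
  then have "a\<^sup>2 + b\<^sup>2 - 1 \<le> 2 * (a * b) * (1 - 1 / (2 * R\<^sup>2))"
    by (simp add: power2_diff algebra_simps)
  moreover have "P \<noteq> 0" "Q \<noteq> 0" using P Q by auto
  moreover have "1 \<le> (cmod (P - Q))\<^sup>2" using PQ by (simp add: one_le_power)
  ultimately have "1 \<le> a\<^sup>2 + b\<^sup>2 - 2 * (a * b) * cos (Arg (Q / P))"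
    by (simp add: cmod_diff_power2_cos_Arg a_def b_def mult.assoc)
  moreover note \<open>a\<^sup>2 + b\<^sup>2 - 1 \<le> _\<close>
  ultimately have "(a * b) * cos (Arg (Q / P)) \<le> (a * b) * (1 - 1 / (2 * R\<^sup>2))"
    by linarith
  moreover have "0 < a * b" unfolding a_def b_def using P Q by (intro mult_pos_pos) linarith+
  ultimately show ?thesis by (simp only: mult_le_cancel_left_pos)
qed

section \<open>A trigonometric estimate\<close>

lemma cos_le_Maclaurin4: "cos (y::real) \<le> 1 - y\<^sup>2 / 2 + y ^ 4 / 24"
proof -
  obtain t where t: "cos y = (\<Sum>m<4. cos_coeff m * y ^ m) + (cos (t + 1/2 * real 4 * pi) / fact 4) * y ^ 4"
    using Maclaurin_cos_expansion[of y 4] by blast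
  have "(\<Sum>m<4. cos_coeff m * y ^ m) = 1 - y\<^sup>2 / 2"
    by (simp add: lessThan_nat_numeral cos_coeff_def power2_eq_square)
  moreover have "(fact 4 :: real) = 24" by (simp add: numeral_eq_Suc)
  moreover have "cos (t + 1/2 * real 4 * pi) * y ^ 4 \<le> 1 * y ^ 4"
    by (intro mult_right_mono) (auto simp: zero_le_even_power)
  ultimately show ?thesis using t by simp
qed

lemma one_minus_sq_half_le_cos: "1 - y\<^sup>2 / 2 \<le> cos (y::real)"
proof -
  have "(sin (y/2))\<^sup>2 \<le> (y/2)\<^sup>2"
    using abs_sin_x_le_abs_x[of "y/2"] by (metis abs_ge_zero power2_abs power_mono)
  then show ?thesis using cos_double_sin[of "y/2"] by (simp add: power_divide)
qed

lemma sqrt3_le: "sqrt 3 \<le> 1.7321"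
proof -
  have "sqrt 3 \<le> sqrt (1.7321\<^sup>2)" by (rule real_sqrt_le_mono) (simp add: power2_eq_square)
  then show ?thesis by simp
qed

lemma quartic_estimate:
  assumes q: "0 < q" "q \<le> 0.0125" and S: "S\<^sup>2 = (2 * pi / 3 + q) * q"
  shows "S ^ 4 / 12 + q\<^sup>2 / 2 + sqrt 3 * q \<le> S\<^sup>2"
proof -
  define K where "K = 2 * pi / 3 + q"
  have K: "2.09 \<le> K" "K \<le> 2.2" using q pi_approx by (simp_all add: K_def)
  have "K * K * q \<le> 2.2 * 2.2 * 0.0125"
    using K q by (intro mult_mono) auto
  then have "K * K * q / 12 + q / 2 + sqrt 3 \<le> K"
    using q sqrt3_le K by simp
  then have "(K * K * q / 12 + q / 2 + sqrt 3) * q \<le> K * q"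
    using q by (intro mult_right_mono) auto
  moreover have "S ^ 4 = (K * q)\<^sup>2"
    using S by (simp add: K_def power4_eq_xxxx power2_eq_square mult.assoc)
  ultimately show ?thesis using S by (simp add: K_def power2_eq_square algebra_simps)
qed

lemma four_sin_mul_sin_le_1:
  fixes n :: real
  assumes n: "7 \<le> n"
  shows "4 * sin (pi/6 * (n / (n - 1))) * sin (pi/6 * ((n - 1) / n)) \<le> 1"
proof -
  define q where "q = pi / (6 * n * (n - 1))"
  define A B where "A = pi/6 * (n / (n - 1))" and "B = pi/6 * ((n - 1) / n)"
  define S where "S = (2 * n - 1) * q"
  have n0: "0 < n" "0 < n - 1" using n by auto
  have q0: "0 < q" using n0 by (simp add: q_def)
  have "A - B = S"
    using n0 by (simp add: A_def B_def S_def q_def field_simps power2_eq_square; simp add: algebra_simps)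
  have "A + B = pi/3 + q"
    using n0 by (simp add: A_def B_def q_def field_simps power2_eq_square; simp add: algebra_simps)
  have "(2 * n - 1)\<^sup>2 * q = 2 * pi / 3 + q"
    using n0 by (simp add: q_def field_simps power2_eq_square; simp add: algebra_simps)
  then have "S\<^sup>2 = (2 * pi / 3 + q) * q" by (simp add: S_def power_mult_distrib power2_eq_square)
  have "42 \<le> n * (n - 1)" using mult_mono[of 7 n 6 "n - 1"] n by simp
  then have "q \<le> pi / (6 * 42)"
    unfolding q_def using n0 by (intro divide_left_mono) (auto simp: mult.assoc)
  then have "q \<le> 0.0125" using pi_approx by simp
  have "4 * sin A * sin B = 2 * (cos (A - B) - cos (A + B))"
    by (subst mult.assoc, subst sin_times_sin) simp
  also have "\<dots> = 2 * cos S - cos q + sqrt 3 * sin q"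
    using \<open>A - B = S\<close> \<open>A + B = pi/3 + q\<close> by (simp add: cos_add cos_60 sin_60 algebra_simps)
  also have "\<dots> \<le> (2 - S\<^sup>2 + S ^ 4 / 12) - (1 - q\<^sup>2 / 2) + sqrt 3 * q"
    using cos_le_Maclaurin4[of S] one_minus_sq_half_le_cos[of q] sin_x_le_x[of q] q0
    by (intro add_mono diff_mono) auto
  also have "\<dots> \<le> 1"
    using quartic_estimate[OF q0 \<open>q \<le> 0.0125\<close> \<open>S\<^sup>2 = _\<close>] by simp
  finally show ?thesis by (simp add: A_def B_def)
qed

section \<open>Closed polygons in an annulus\<close>

lemma periodic_mod:
  fixes p :: "nat \<Rightarrow> 'a"
  assumes "\<And>i. p (i + g) = p i"
  shows "p i = p (i mod g)"
proof -
  have "p (i mod g + k * g) = p (i mod g)" for k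
  proof (induction k)
    case (Suc k)
    have "i mod g + Suc k * g = (i mod g + k * g) + g" by simp
    then show ?case using Suc assms by metis
  qed simp
  from this[of "i div g"] show ?thesis by simp
qed

lemma periodic_bool_change:
  assumes g: "0 < g" and per: "\<And>i. b (i + g) = b i" and "b i" "\<not> b j"
  shows "\<exists>k<g. b k \<and> \<not> b (Suc k)"
proof (rule ccontr)
  assume no_change: "\<not> ?thesis"
  have step: "b (Suc k)" if "b k" for k
  proof -
    have "b (k mod g)" using that periodic_mod[of b, OF per] by simp
    then have "b (Suc (k mod g))" using no_change g by auto
    then have "b (Suc (k mod g) mod g)" using periodic_mod[of b, OF per] by simp
    then show ?thesis using periodic_mod[of b, OF per] by (simp add: mod_Suc_eq)
  qed
  have up: "b (i + m)" for m
    by (induction m) (use \<open>b i\<close> step in auto)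
  have "i \<le> j + i * g" using g by (cases g) auto
  then have "b (j + i * g)" using up[of "j + i * g - i"] by simp
  moreover have "b (j + i * g) = b j"
    using periodic_mod[of b, OF per, of "j + i * g"] periodic_mod[of b, OF per, of j] by simp
  ultimately show False using \<open>\<not> b j\<close> by simp
qed

lemma sum_sgn_odd:
  fixes x :: "nat \<Rightarrow> real"
  assumes "odd g" "\<And>i. x i \<noteq> 0"
  shows "\<exists>m::int. odd m \<and> (\<Sum>i<g. sgn (x i)) = of_int m"
proof -
  have "\<exists>m::int. (odd m \<longleftrightarrow> odd k) \<and> (\<Sum>i<k. sgn (x i)) = of_int m" for k
  proof (induction k)
    case (Suc k)
    then obtain m :: int where "odd m \<longleftrightarrow> odd k" "(\<Sum>i<k. sgn (x i)) = of_int m" by blast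
    moreover have "sgn (x k) = 1 \<or> sgn (x k) = -1" using assms(2)[of k] by (auto simp: sgn_if)
    ultimately show ?case
      by (elim disjE; intro exI[of _ "m + 1"] exI[of _ "m - 1"]) auto
  qed simp
  then show ?thesis using assms(1) by blast
qed

lemma periodic_sum_shift:
  fixes p :: "nat \<Rightarrow> 'a::comm_monoid_add"
  assumes "\<And>i. p (i + g) = p i"
  shows "(\<Sum>i<g. p (Suc i)) = (\<Sum>i<g. p i)"
proof (cases g)
  case (Suc n)
  have "(\<Sum>i<g. p (Suc i)) = (\<Sum>i<n. p (Suc i)) + p 0" using assms[of 0] Suc by simp
  also have "\<dots> = (\<Sum>i<g. p i)" unfolding Suc sum.lessThan_Suc_shift by (simp add: add.commute)
  finally show ?thesis .
qed simp

(* The term w i is charged to the two ends i and i + 1 of the i-th side, with F or B according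
   to the label of the side. A vertex receives at most 2 h, and at most h when its two sides carry
   different labels; labels that are not constant change at two vertices at least. *)
lemma periodic_sum_le_vertex_charges:
  fixes lab :: "nat \<Rightarrow> bool" and F B w :: "nat \<Rightarrow> real"
  assumes g: "0 < g" and per: "\<And>i. lab (i + g) = lab i" "\<And>i. F (i + g) = F i" "\<And>i. B (i + g) = B i"
    and h: "\<And>i. F i \<le> h" "\<And>i. B i \<le> h" "\<And>i. F i + B i \<le> h"
    and w: "\<And>i. w i \<le> (if lab i then F i + F (Suc i) else B i + B (Suc i))"
  shows "(\<Sum>i<g. w i) \<le> 2 * real g * h"
    and "lab k \<Longrightarrow> \<not> lab l \<Longrightarrow> (\<Sum>i<g. w i) \<le> (2 * real g - 2) * h"
proof -
  define G where "G i c = (if c then F i else B i)" for i c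
  define V where "V i = G (Suc i) (lab i) + G (Suc i) (lab (Suc i))" for i
  have "w i \<le> G i (lab i) + G (Suc i) (lab i)" for i
    using w[of i] by (simp add: G_def split: if_splits)
  then have "(\<Sum>i<g. w i) \<le> (\<Sum>i<g. G i (lab i)) + (\<Sum>i<g. G (Suc i) (lab i))"
    unfolding sum.distrib[symmetric] by (intro sum_mono)
  also have "(\<Sum>i<g. G i (lab i)) = (\<Sum>i<g. G (Suc i) (lab (Suc i)))"
    by (rule periodic_sum_shift[symmetric]) (simp add: G_def per)
  finally have sV: "(\<Sum>i<g. w i) \<le> (\<Sum>i<g. V i)" by (simp add: V_def sum.distrib add.commute)
  have V2: "V i \<le> 2 * h" for i using h[of "Suc i"] by (auto simp: V_def G_def)
  have V1: "V i \<le> h" if "lab i \<noteq> lab (Suc i)" for i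
    using h(3)[of "Suc i"] that by (auto simp: V_def G_def add.commute)
  have "(\<Sum>i<g. V i) \<le> (\<Sum>i<g. 2 * h)" by (intro sum_mono V2)
  then show "(\<Sum>i<g. w i) \<le> 2 * real g * h" using sV by simp
  assume "lab k" "\<not> lab l"
  obtain k1 where k1: "k1 < g" "lab k1" "\<not> lab (Suc k1)"
    using periodic_bool_change[OF g per(1) \<open>lab k\<close> \<open>\<not> lab l\<close>] by blast
  obtain k2 where k2: "k2 < g" "\<not> lab k2" "lab (Suc k2)"
    using periodic_bool_change[of g "\<lambda>i. \<not> lab i" l k] g per(1) \<open>lab k\<close> \<open>\<not> lab l\<close> by auto
  define c where "c i = (if i = k1 then h else 0) + (if i = k2 then h else 0)" for i
  have "V i \<le> 2 * h - c i" for i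
    using V1[of i] V2[of i] k1 k2 by (auto simp: c_def)
  then have "(\<Sum>i<g. V i) \<le> (\<Sum>i<g. 2 * h - c i)" by (intro sum_mono)
  also have "\<dots> = 2 * real g * h - 2 * h"
    using k1 k2 by (auto simp: c_def sum_subtractf sum.distrib)
  finally show "(\<Sum>i<g. w i) \<le> (2 * real g - 2) * h" using sV by (simp add: algebra_simps)
qed

lemma excess_sum_bound:
  fixes \<theta> \<alpha> :: "nat \<Rightarrow> real"
  assumes g: "0 < g" and per: "\<And>i. \<theta> (i + g) = \<theta> i" "\<And>i. \<alpha> (i + g) = \<alpha> i"
    and \<alpha>: "\<And>i. pi/6 \<le> \<alpha> i" "\<And>i. \<alpha> i \<le> pi/6 + w"
    and \<theta>: "\<And>i. \<alpha> i + \<alpha> (Suc i) - 2 * w \<le> \<bar>\<theta> i\<bar>" "\<And>i. \<bar>\<theta> i\<bar> \<le> \<alpha> i + \<alpha> (Suc i)"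
    and nz: "\<And>i. \<theta> i \<noteq> 0"
  shows "\<bar>\<Sum>i<g. 3 * \<theta> i - pi * sgn (\<theta> i)\<bar> \<le> 2 * real g * (3 * w)"
    and "0 < \<theta> k \<Longrightarrow> \<theta> l < 0 \<Longrightarrow>
      \<bar>\<Sum>i<g. 3 * \<theta> i - pi * sgn (\<theta> i)\<bar> \<le> (2 * real g - 2) * (3 * w)"
proof -
  define \<psi> where "\<psi> i = 3 * \<theta> i - pi * sgn (\<theta> i)" for i
  define F B where "F i = 3 * \<alpha> i - pi/2" and "B i = pi/2 - 3 * \<alpha> i + 3 * w" for i
  have perFB: "F (i + g) = F i" "B (i + g) = B i" for i by (simp_all add: F_def B_def per)
  have h: "F i \<le> 3 * w" "B i \<le> 3 * w" "F i + B i \<le> 3 * w" for i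
    using \<alpha>[of i] by (simp_all add: F_def B_def)
  have up: "\<psi> i \<le> (if 0 < \<theta> i then F i + F (Suc i) else B i + B (Suc i))"
    and lo: "- \<psi> i \<le> (if \<not> 0 < \<theta> i then F i + F (Suc i) else B i + B (Suc i))" for i
    using \<theta>[of i] nz[of i] by (auto simp: \<psi>_def F_def B_def sgn_if abs_if)
  have per_lab: "(0 < \<theta> (i + g)) = (0 < \<theta> i)" "(\<not> 0 < \<theta> (i + g)) = (\<not> 0 < \<theta> i)" for i
    by (simp_all add: per)
  note pos = periodic_sum_le_vertex_charges[where lab = "\<lambda>i. 0 < \<theta> i", OF g per_lab(1) perFB h up]
  note neg = periodic_sum_le_vertex_charges[where lab = "\<lambda>i. \<not> 0 < \<theta> i", OF g per_lab(2) perFB h lo]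
  have sum_\<psi>: "(\<Sum>i<g. 3 * \<theta> i - pi * sgn (\<theta> i)) = (\<Sum>i<g. \<psi> i)"
    and sum_neg: "(\<Sum>i<g. - \<psi> i) = - (\<Sum>i<g. \<psi> i)"
    by (simp add: \<psi>_def) (rule sum_negf)
  show "\<bar>\<Sum>i<g. 3 * \<theta> i - pi * sgn (\<theta> i)\<bar> \<le> 2 * real g * (3 * w)"
    unfolding sum_\<psi> abs_le_iff using pos(1) neg(1) sum_neg by linarith
  assume "0 < \<theta> k" "\<theta> l < 0"
  then show "\<bar>\<Sum>i<g. 3 * \<theta> i - pi * sgn (\<theta> i)\<bar> \<le> (2 * real g - 2) * (3 * w)"
    unfolding sum_\<psi> abs_le_iff using pos(2)[of k l] neg(2)[of l k] sum_neg by auto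
qed

(* The values of a flow along a cycle of a cubic graph form such a polygon with R = r - 1:
   the vertices f i are the values on the cycle, the sides f (Suc i) - f i those on the third edges. *)
definition annular_polygon :: "real \<Rightarrow> nat \<Rightarrow> (nat \<Rightarrow> complex) \<Rightarrow> bool" where
  "annular_polygon R g f \<longleftrightarrow> (\<forall>i. f (i + g) = f i) \<and>
     (\<forall>i. 1 \<le> cmod (f i) \<and> cmod (f i) \<le> R) \<and>
     (\<forall>i. 1 \<le> cmod (f (Suc i) - f i) \<and> cmod (f (Suc i) - f i) \<le> R)"

definition turning_angle :: "(nat \<Rightarrow> complex) \<Rightarrow> nat \<Rightarrow> real" where
  "turning_angle f i = Arg (f (Suc i) / f i)"

lemma sum_turning_angle:
  assumes "\<And>i. f i \<noteq> 0" "f g = f 0"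
  shows "\<exists>n::int. (\<Sum>i<g. turning_angle f i) = 2 * pi * n"
proof -
  have "cis (\<Sum>i<k. turning_angle f i) = sgn (f k / f 0)" for k
  proof (induction k)
    case (Suc k)
    have "cis (\<Sum>i<Suc k. turning_angle f i) = cis (\<Sum>i<k. turning_angle f i) * cis (turning_angle f k)"
      by (simp add: cis_mult)
    also have "\<dots> = sgn (f k / f 0) * sgn (f (Suc k) / f k)"
      using Suc assms(1) by (simp add: turning_angle_def cis_Arg)
    also have "\<dots> = sgn ((f k / f 0) * (f (Suc k) / f k))" by (rule sgn_mult[symmetric])
    also have "(f k / f 0) * (f (Suc k) / f k) = f (Suc k) / f 0" using assms(1)[of k] by simp
    finally show ?case .
  qed (use assms in simp)
  from this[of g] have "cos (\<Sum>i<g. turning_angle f i) = 1"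
    using assms by (metis Re_complex_of_real cis.sel(1) div_self one_complex.sel(1) sgn_one)
  then obtain n :: int where "(\<Sum>i<g. turning_angle f i) = of_int n * 2 * pi"
    unfolding cos_one_2pi_int by blast
  then show ?thesis by (intro exI[of _ n]) simp
qed

lemma annular_polygon_sum_turning_angle:
  assumes "annular_polygon R g f"
  shows "\<exists>n::int. (\<Sum>i<g. turning_angle f i) = 2 * pi * n"
proof (rule sum_turning_angle)
  show "f i \<noteq> 0" for i using assms by (auto simp: annular_polygon_def dest: spec[of _ i])
  show "f g = f 0" using assms by (auto simp: annular_polygon_def dest: spec[of _ 0])
qed

lemma annular_polygon_turning_angle_bounds:
  assumes f: "annular_polygon (2 * sin x) g f" and x: "pi/6 \<le> x" "x \<le> pi/4"
  defines "\<alpha> i \<equiv> arcsin (sin x / cmod (f i))"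
  shows "\<alpha> i + \<alpha> (Suc i) - 2 * (x - pi/6) \<le> \<bar>turning_angle f i\<bar>"
    and "\<bar>turning_angle f i\<bar> \<le> \<alpha> i + \<alpha> (Suc i)"
    and "pi/6 \<le> \<alpha> i" "\<alpha> i \<le> x"
    and "turning_angle f i \<noteq> 0"
proof -
  have P: "1 \<le> cmod (f i)" "cmod (f i) \<le> 2 * sin x"
    and Q: "1 \<le> cmod (f (Suc i))" "cmod (f (Suc i)) \<le> 2 * sin x"
    and PQ: "1 \<le> cmod (f i - f (Suc i))" "cmod (f i - f (Suc i)) \<le> 2 * sin x"
    using f by (auto simp: annular_polygon_def norm_minus_commute)
  show lower: "\<alpha> i + \<alpha> (Suc i) - 2 * (x - pi/6) \<le> \<bar>turning_angle f i\<bar>"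
    using abs_Arg_div_ge_arcsin_sum[OF x P Q PQ(1)] by (simp add: \<alpha>_def turning_angle_def)
  show "\<bar>turning_angle f i\<bar> \<le> \<alpha> i + \<alpha> (Suc i)"
    using abs_Arg_div_le_arcsin_sum[OF x P Q PQ(2)] by (simp add: \<alpha>_def turning_angle_def)
  have "pi/6 \<le> \<alpha> j" "\<alpha> j \<le> x" for j
    using arcsin_sin_div_bounds[of x "cmod (f j)"] f x by (auto simp: annular_polygon_def \<alpha>_def)
  then show "pi/6 \<le> \<alpha> i" "\<alpha> i \<le> x" by auto
  have "0 < \<bar>turning_angle f i\<bar>"
    using lower \<open>pi/6 \<le> \<alpha> i\<close> \<open>pi/6 \<le> \<alpha> (Suc i)\<close> x pi_gt_zero by argo
  then show "turning_angle f i \<noteq> 0" by auto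
qed

lemma annular_polygon_excess_bound:
  assumes f: "annular_polygon (2 * sin x) g f" and g: "0 < g" and x: "pi/6 \<le> x" "x \<le> pi/4"
  defines "\<theta> \<equiv> turning_angle f"
  shows "\<bar>\<Sum>i<g. 3 * \<theta> i - pi * sgn (\<theta> i)\<bar> \<le> 2 * real g * (3 * (x - pi/6))"
    and "0 < \<theta> k \<Longrightarrow> \<theta> l < 0 \<Longrightarrow>
      \<bar>\<Sum>i<g. 3 * \<theta> i - pi * sgn (\<theta> i)\<bar> \<le> (2 * real g - 2) * (3 * (x - pi/6))"
proof -
  define \<alpha> where "\<alpha> i = arcsin (sin x / cmod (f i))" for i
  have per_f: "f (i + g) = f i" for i using f by (simp add: annular_polygon_def)
  have per: "\<theta> (i + g) = \<theta> i" "\<alpha> (i + g) = \<alpha> i" for i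
    using per_f[of i] per_f[of "Suc i"] by (simp_all add: \<theta>_def turning_angle_def \<alpha>_def)
  note bounds = annular_polygon_turning_angle_bounds[OF f x, folded \<alpha>_def \<theta>_def]
  have "\<alpha> i \<le> pi/6 + (x - pi/6)" for i using bounds(4) by simp
  note excess = excess_sum_bound[OF g per bounds(3) this bounds(1,2,5)]
  show "\<bar>\<Sum>i<g. 3 * \<theta> i - pi * sgn (\<theta> i)\<bar> \<le> 2 * real g * (3 * (x - pi/6))"
    by (rule excess(1))
  show "0 < \<theta> k \<Longrightarrow> \<theta> l < 0 \<Longrightarrow>
      \<bar>\<Sum>i<g. 3 * \<theta> i - pi * sgn (\<theta> i)\<bar> \<le> (2 * real g - 2) * (3 * (x - pi/6))"
    by (rule excess(2))
qed

lemma annular_polygon_excess_odd: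
  assumes f: "annular_polygon (2 * sin x) g f" and g: "odd g" and x: "pi/6 \<le> x" "x \<le> pi/4"
  defines "\<theta> \<equiv> turning_angle f"
  shows "pi \<le> \<bar>\<Sum>i<g. 3 * \<theta> i - pi * sgn (\<theta> i)\<bar>"
proof -
  obtain n :: int where n: "(\<Sum>i<g. \<theta> i) = 2 * pi * n"
    using annular_polygon_sum_turning_angle[OF f] by (auto simp: \<theta>_def)
  have "\<theta> i \<noteq> 0" for i using annular_polygon_turning_angle_bounds(5)[OF f x] by (simp add: \<theta>_def)
  then obtain m :: int where m: "odd m" "(\<Sum>i<g. sgn (\<theta> i)) = of_int m"
    using sum_sgn_odd[OF g] by blast
  have "(\<Sum>i<g. 3 * \<theta> i - pi * sgn (\<theta> i)) = 3 * (\<Sum>i<g. \<theta> i) - pi * (\<Sum>i<g. sgn (\<theta> i))"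
    by (simp add: sum_subtractf sum_distrib_left)
  also have "\<dots> = pi * of_int (6 * n - m)" by (simp add: n m algebra_simps)
  finally have "(\<Sum>i<g. 3 * \<theta> i - pi * sgn (\<theta> i)) = pi * of_int (6 * n - m)" .
  moreover have "1 \<le> \<bar>6 * n - m\<bar>" using m(1) by (cases "6 * n - m = 0") auto
  ultimately show ?thesis by (simp add: abs_mult)
qed

lemma two_sin_le_of_angle_bound:
  assumes x0: "pi/6 < x0" "x0 \<le> pi/4" and R: "1 \<le> R"
    and no_angle: "\<And>x. pi/6 \<le> x \<Longrightarrow> x < x0 \<Longrightarrow> R = 2 * sin x \<Longrightarrow> False"
  shows "2 * sin x0 \<le> R"
proof (rule ccontr)
  assume "\<not> ?thesis"
  then have R2: "R / 2 < sin x0" by simp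
  then have R1: "-1 \<le> R / 2" "R / 2 \<le> 1" using R sin_le_one[of x0] by linarith+
  have "arcsin (1/2) \<le> arcsin (R / 2)" using R R1 by (intro arcsin_le_arcsin) auto
  moreover have "arcsin (R / 2) < arcsin (sin x0)"
    using R1 R2 abs_sin_le_one[of x0] by (subst arcsin_less_mono) auto
  moreover have "arcsin (sin x0) = x0" using x0 pi_gt_zero by (intro arcsin_sin) linarith+
  moreover have "R = 2 * sin (arcsin (R / 2))" using R1 by simp
  ultimately show False using no_angle[of "arcsin (R / 2)"] by simp
qed

lemma annular_polygon_ge_1: "annular_polygon R g f \<Longrightarrow> 1 \<le> R"
  unfolding annular_polygon_def by (meson order_trans)

theorem annular_polygon_bound_odd:
  assumes f: "annular_polygon R g f" and g: "odd g" "3 \<le> g"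
  shows "2 * sin (pi/6 * ((real g + 1) / real g)) \<le> R"
proof (rule two_sin_le_of_angle_bound)
  show "pi/6 < pi/6 * ((real g + 1) / real g)" "pi/6 * ((real g + 1) / real g) \<le> pi/4"
    using g by (simp_all add: field_simps)
  show "1 \<le> R" using f by (rule annular_polygon_ge_1)
  fix x assume x: "pi/6 \<le> x" "x < pi/6 * ((real g + 1) / real g)" and "R = 2 * sin x"
  have f': "annular_polygon (2 * sin x) g f" using f \<open>R = 2 * sin x\<close> by simp
  have x4: "x \<le> pi/4" using x(2) \<open>pi/6 * ((real g + 1) / real g) \<le> pi/4\<close> by linarith
  have "pi \<le> \<bar>\<Sum>i<g. 3 * turning_angle f i - pi * sgn (turning_angle f i)\<bar>"
    by (rule annular_polygon_excess_odd[OF f' g(1) x(1) x4])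
  also have "\<dots> \<le> 2 * real g * (3 * (x - pi/6))"
    using g by (intro annular_polygon_excess_bound(1)[OF f' _ x(1) x4]) simp
  finally have "pi * (real g + 1) \<le> 6 * (real g * x)" by (simp add: algebra_simps)
  moreover have "real g * x < pi/6 * (real g + 1)" using x g by (simp add: field_simps)
  ultimately show False by simp
qed

lemma annular_polygon_constant_sign:
  assumes f: "annular_polygon (2 * sin x) g f" and g: "odd g" "3 \<le> g"
    and x: "pi/6 \<le> x" "6 * (real g - 1) * (x - pi/6) < pi"
  obtains \<sigma> :: int where "\<sigma> = 1 \<or> \<sigma> = -1" "\<And>i. sgn (turning_angle f i) = of_int \<sigma>"
proof -
  define \<theta> where "\<theta> = turning_angle f"
  have "12 * (x - pi/6) \<le> 6 * (real g - 1) * (x - pi/6)" using g x(1) by (intro mult_right_mono) auto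
  then have x4: "x \<le> pi/4" using x(2) by argo
  have nz: "\<theta> i \<noteq> 0" for i
    using annular_polygon_turning_angle_bounds(5)[OF f x(1) x4] by (simp add: \<theta>_def)
  have "(\<forall>i. 0 < \<theta> i) \<or> (\<forall>i. \<theta> i < 0)"
  proof (rule ccontr)
    assume "\<not> ?thesis"
    with nz obtain k l where "0 < \<theta> k" "\<theta> l < 0" by (meson linorder_neqE_linordered_idom)
    have "pi \<le> \<bar>\<Sum>i<g. 3 * \<theta> i - pi * sgn (\<theta> i)\<bar>"
      unfolding \<theta>_def by (rule annular_polygon_excess_odd[OF f g(1) x(1) x4])
    also have "\<dots> \<le> (2 * real g - 2) * (3 * (x - pi/6))"
      using g \<open>0 < \<theta> k\<close> \<open>\<theta> l < 0\<close> unfolding \<theta>_def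
      by (intro annular_polygon_excess_bound(2)[OF f _ x(1) x4]) auto
    finally show False using x(2) by (simp add: algebra_simps)
  qed
  then show ?thesis using that[of 1] that[of "-1"] by (auto simp: \<theta>_def)
qed

lemma annular_polygon_total_turning:
  assumes f: "annular_polygon (2 * sin x) g f" and g: "odd g" "3 \<le> g" "g mod 6 = 1 \<or> g mod 6 = 3"
    and x: "pi/6 \<le> x" "x \<le> pi/4" "6 * (real g - 1) * (x - pi/6) < pi"
  shows "g mod 6 = 1" "(\<Sum>i<g. \<bar>turning_angle f i\<bar>) = pi * (real g - 1) / 3"
proof -
  define \<theta> where "\<theta> = turning_angle f"
  obtain \<sigma> :: int where \<sigma>: "\<sigma> = 1 \<or> \<sigma> = -1" and sgn_\<theta>: "\<And>i. sgn (\<theta> i) = of_int \<sigma>"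
    using annular_polygon_constant_sign[OF f g(1,2) x(1,3)] unfolding \<theta>_def by blast
  have abs_\<theta>: "\<bar>\<theta> i\<bar> = of_int \<sigma> * \<theta> i" for i
    using sgn_\<theta>[of i] \<sigma> by (elim disjE) (auto simp: sgn_if split: if_splits)
  obtain n :: int where n: "(\<Sum>i<g. \<theta> i) = 2 * pi * n"
    using annular_polygon_sum_turning_angle[OF f] by (auto simp: \<theta>_def)
  define k where "k = \<sigma> * n"
  have abs_sum: "(\<Sum>i<g. \<bar>\<theta> i\<bar>) = 2 * pi * k"
    by (simp add: abs_\<theta> k_def n flip: sum_distrib_left)
  have excess: "\<bar>\<Sum>i<g. 3 * \<theta> i - pi * sgn (\<theta> i)\<bar> = pi * \<bar>of_int (6 * k - int g)\<bar>"
  proof -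
    have "(\<Sum>i<g. 3 * \<theta> i - pi * sgn (\<theta> i)) = of_int \<sigma> * (3 * (\<Sum>i<g. \<bar>\<theta> i\<bar>) - pi * real g)"
      using \<sigma> by (auto simp: sgn_\<theta> abs_\<theta> sum_subtractf sum_distrib_left sum_negf)
    also have "3 * (\<Sum>i<g. \<bar>\<theta> i\<bar>) - pi * real g = pi * of_int (6 * k - int g)"
      by (simp add: abs_sum algebra_simps)
    finally show ?thesis using \<sigma> pi_gt_zero by (auto simp: abs_mult)
  qed
  have "pi * \<bar>of_int (6 * k - int g)\<bar> \<le> 2 * real g * (3 * (x - pi/6))"
    using annular_polygon_excess_bound(1)[OF f _ x(1,2)] g unfolding excess[symmetric] \<theta>_def
    by simp
  also have "\<dots> = (6 * (real g - 1) * (x - pi/6)) * (real g / (real g - 1))"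
    using g by (simp add: field_simps)
  also have "\<dots> < pi * (real g / (real g - 1))"
    using x(3) g by (intro mult_strict_right_mono) auto
  also have "\<dots> \<le> pi * (3/2)"
    using g by (intro mult_left_mono) (auto simp: field_simps)
  finally have "\<bar>of_int (6 * k - int g)\<bar> < (3/2 :: real)"
    using pi_gt_zero by (simp only: mult_less_cancel_left_pos)
  then have "\<bar>6 * k - int g\<bar> \<le> 1" by linarith
  then have "g mod 6 = 1 \<and> 6 * k = int g - 1" using g(3) by presburger
  then have "g mod 6 = 1" "6 * of_int k = real g - 1"
    using of_int_eq_iff[of "6 * k" "int g - 1", where 'a = real] by auto
  then show "g mod 6 = 1" "(\<Sum>i<g. \<bar>turning_angle f i\<bar>) = pi * (real g - 1) / 3"
    using abs_sum by (simp_all add: \<theta>_def flip: \<open>6 * of_int k = real g - 1\<close>)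
qed

lemma annular_polygon_small_turn_bound:
  assumes f: "annular_polygon R g f" and R: "R\<^sup>2 \<le> 2" and g: "7 \<le> g"
    and turn: "\<bar>turning_angle f i\<bar> \<le> pi * (real g - 1) / (3 * real g)"
  shows "2 * sin (pi/6 * (real g / (real g - 1))) \<le> R"
proof -
  define a where "a = pi/6 * ((real g - 1) / real g)"
  have a: "0 < a" "a \<le> pi/6" using g by (auto simp: a_def field_simps)
  then have "0 < sin a" using pi_gt_zero by (intro sin_gt_zero) linarith+
  have R1: "1 \<le> R" using f by (rule annular_polygon_ge_1)
  have "2 * a = pi * (real g - 1) / (3 * real g)" using g by (simp add: a_def field_simps)
  then have "\<bar>turning_angle f i\<bar> \<le> 2 * a" using turn by simp
  have "1 \<le> cmod (f i)" "cmod (f i) \<le> R" "1 \<le> cmod (f (Suc i))" "cmod (f (Suc i)) \<le> R"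
    "1 \<le> cmod (f i - f (Suc i))"
    using f by (auto simp: annular_polygon_def norm_minus_commute dest: spec[of _ i] spec[of _ "Suc i"])
  note cos_turn = cos_Arg_div_le[OF R1 R this]
  have "1 - 2 * (sin a)\<^sup>2 = cos (2 * a)" by (simp add: cos_double_sin)
  also have "\<dots> \<le> cos \<bar>turning_angle f i\<bar>"
    using \<open>\<bar>turning_angle f i\<bar> \<le> 2 * a\<close> a(2) pi_gt_zero by (intro cos_monotone_0_pi_le) argo+
  also have "\<dots> \<le> 1 - 1 / (2 * R\<^sup>2)"
    using cos_turn by (simp add: turning_angle_def)
  finally have "1 / (2 * R\<^sup>2) \<le> 2 * (sin a)\<^sup>2" by simp
  then have "1 \<le> 2 * (sin a)\<^sup>2 * (2 * R\<^sup>2)" using R1 by (simp add: divide_le_eq)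
  then have "1 \<le> (2 * R * sin a)\<^sup>2" by (simp add: power_mult_distrib algebra_simps)
  moreover have "0 \<le> 2 * R * sin a" using R1 \<open>0 < sin a\<close> by simp
  ultimately have "1 \<le> 2 * R * sin a" using power2_le_imp_le[of 1 "2 * R * sin a"] by simp
  moreover have "4 * sin (pi/6 * (real g / (real g - 1))) * sin a \<le> 1"
    using four_sin_mul_sin_le_1[of "real g"] g by (simp add: a_def)
  moreover have "2 * sin (pi/6 * (real g / (real g - 1))) * (2 * sin a)
      = 4 * sin (pi/6 * (real g / (real g - 1))) * sin a" "R * (2 * sin a) = 2 * R * sin a"
    by simp_all
  ultimately have "2 * sin (pi/6 * (real g / (real g - 1))) * (2 * sin a) \<le> R * (2 * sin a)"
    by linarith
  then show ?thesis using \<open>0 < sin a\<close> by (simp add: mult_le_cancel_right_pos)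
qed

theorem annular_polygon_bound_mod6_1_3:
  assumes f: "annular_polygon R g f" and g: "odd g" "3 \<le> g" "g mod 6 = 1 \<or> g mod 6 = 3"
  shows "2 * sin (pi/6 * (real g / (real g - 1))) \<le> R"
proof (rule two_sin_le_of_angle_bound)
  show x0: "pi/6 < pi/6 * (real g / (real g - 1))" "pi/6 * (real g / (real g - 1)) \<le> pi/4"
    using g by (simp_all add: field_simps)
  show "1 \<le> R" using f by (rule annular_polygon_ge_1)
  fix x assume x: "pi/6 \<le> x" "x < pi/6 * (real g / (real g - 1))" and R: "R = 2 * sin x"
  have f': "annular_polygon (2 * sin x) g f" using f R by simp
  have x4: "x \<le> pi/4" using x(2) x0(2) by linarith
  have "6 * (real g - 1) * (x - pi/6) < pi" using x(2) g by (simp add: field_simps)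
  note total = annular_polygon_total_turning[OF f' g x(1) x4 this]
  define c where "c = pi * (real g - 1) / (3 * real g)"
  have "\<exists>i. \<bar>turning_angle f i\<bar> \<le> c"
  proof (rule ccontr)
    assume "\<nexists>i. \<bar>turning_angle f i\<bar> \<le> c"
    then have "(\<Sum>i<g. c) < (\<Sum>i<g. \<bar>turning_angle f i\<bar>)"
      using g by (intro sum_strict_mono) (auto simp: not_le lessThan_empty_iff)
    then show False using total(2) g by (simp add: c_def)
  qed
  then obtain i where "\<bar>turning_angle f i\<bar> \<le> c" by blast
  moreover have "7 \<le> g" using total(1) g(2) by presburger
  moreover have "R\<^sup>2 \<le> 2"
  proof -
    have "sin x \<le> sin (pi/4)" using x x4 pi_gt_zero by (intro sin_monotone_2pi_le) auto
    then have "R \<le> sqrt 2" using R by (simp add: sin_45)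
    then show ?thesis using \<open>1 \<le> R\<close> by (metis power_mono real_sqrt_pow2 zero_le_one order_trans zero_le_numeral)
  qed
  ultimately have "2 * sin (pi/6 * (real g / (real g - 1))) \<le> 2 * sin x"
    using annular_polygon_small_turn_bound[OF f] R by (simp add: c_def)
  moreover have "sin x < sin (pi/6 * (real g / (real g - 1)))"
    using x x0 pi_gt_zero by (intro sin_monotone_2pi) argo+
  ultimately show False by simp
qed

section \<open>Odd cycles\<close>

definition walk :: "'e set \<Rightarrow> ('e \<Rightarrow> 'v \<times> 'v) \<Rightarrow> (nat \<Rightarrow> 'v) \<Rightarrow> (nat \<Rightarrow> 'e) \<Rightarrow> nat \<Rightarrow> bool" where
  "walk E ends vs es n \<longleftrightarrow>
     (\<forall>i<n. es i \<in> E \<and> (ends (es i) = (vs i, vs (Suc i)) \<or> ends (es i) = (vs (Suc i), vs i)))"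

definition has_walk :: "'e set \<Rightarrow> ('e \<Rightarrow> 'v \<times> 'v) \<Rightarrow> 'v \<Rightarrow> 'v \<Rightarrow> nat \<Rightarrow> bool" where
  "has_walk E ends x y n \<longleftrightarrow> (\<exists>vs es. walk E ends vs es n \<and> vs 0 = x \<and> vs n = y)"

lemma has_walk_refl: "has_walk E ends x x 0"
  unfolding has_walk_def walk_def by (rule exI[of _ "\<lambda>_. x"]) auto

lemma has_walk_edge:
  assumes "e \<in> E" "ends e = (x, y) \<or> ends e = (y, x)"
  shows "has_walk E ends x y 1"
  unfolding has_walk_def walk_def
  by (rule exI[of _ "\<lambda>i. if i = 0 then x else y"], rule exI[of _ "\<lambda>_. e"]) (use assms in auto)

lemma has_walk_append:
  assumes "has_walk E ends x y n" "has_walk E ends y z m"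
  shows "has_walk E ends x z (n + m)"
proof -
  obtain vs1 es1 where w1: "walk E ends vs1 es1 n" "vs1 0 = x" "vs1 n = y"
    using assms(1) unfolding has_walk_def by blast
  obtain vs2 es2 where w2: "walk E ends vs2 es2 m" "vs2 0 = y" "vs2 m = z"
    using assms(2) unfolding has_walk_def by blast
  define vs where "vs t = (if t \<le> n then vs1 t else vs2 (t - n))" for t
  define es where "es t = (if t < n then es1 t else es2 (t - n))" for t
  have "walk E ends vs es (n + m)"
    unfolding walk_def
  proof (intro allI impI)
    fix i assume i: "i < n + m"
    show "es i \<in> E \<and> (ends (es i) = (vs i, vs (Suc i)) \<or> ends (es i) = (vs (Suc i), vs i))"
    proof (cases "i < n")
      case True
      then show ?thesis using w1(1) unfolding walk_def by (auto simp: vs_def es_def)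
    next
      case False
      then have "vs i = vs2 (i - n)" "vs (Suc i) = vs2 (Suc (i - n))" "i - n < m"
        using w1(3) w2(2) i by (auto simp: vs_def Suc_diff_le)
      then show ?thesis using w2(1) False unfolding walk_def by (auto simp: es_def)
    qed
  qed
  moreover have "vs 0 = x" "vs (n + m) = z" using w1 w2 by (auto simp: vs_def)
  ultimately show ?thesis unfolding has_walk_def by blast
qed

lemma has_walk_rev:
  assumes "has_walk E ends x y n"
  shows "has_walk E ends y x n"
proof -
  obtain vs es where w: "walk E ends vs es n" "vs 0 = x" "vs n = y"
    using assms unfolding has_walk_def by blast
  have "walk E ends (\<lambda>t. vs (n - t)) (\<lambda>t. es (n - Suc t)) n"
    unfolding walk_def
  proof (intro allI impI)
    fix i assume i: "i < n"
    then have "n - Suc i < n" "Suc (n - Suc i) = n - i" by simp_all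
    then show "es (n - Suc i) \<in> E \<and> (ends (es (n - Suc i)) = (vs (n - i), vs (n - Suc i))
        \<or> ends (es (n - Suc i)) = (vs (n - Suc i), vs (n - i)))"
      using w(1) unfolding walk_def by metis
  qed
  then show ?thesis unfolding has_walk_def using w by force
qed

lemma walk_has_walk_between:
  assumes "walk E ends vs es n" "i \<le> j" "j \<le> n"
  shows "has_walk E ends (vs i) (vs j) (j - i)"
proof -
  have "walk E ends (\<lambda>t. vs (i + t)) (\<lambda>t. es (i + t)) (j - i)"
    using assms unfolding walk_def by auto
  then show ?thesis unfolding has_walk_def using assms(2)
    by (intro exI[of _ "\<lambda>t. vs (i + t)"] exI[of _ "\<lambda>t. es (i + t)"]) auto
qed

lemma has_walk_parity:
  assumes "\<And>x n. has_walk E ends x x n \<Longrightarrow> even n"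
    and "has_walk E ends u v n" "has_walk E ends u v m"
  shows "even n \<longleftrightarrow> even m"
  using assms(1)[OF has_walk_append[OF assms(2) has_walk_rev[OF assms(3)]]] by simp

lemma not_bipartite_odd_closed_walk:
  assumes G: "graph V E ends" and nb: "\<not> bipartite V E ends"
  shows "\<exists>x n. odd n \<and> has_walk E ends x x n"
proof (rule ccontr)
  assume "\<not> ?thesis"
  then have even: "even n" if "has_walk E ends x x n" for x n using that by blast
  have parity: "even n \<longleftrightarrow> even m" if "has_walk E ends u v n" "has_walk E ends u v m" for u v n m
    by (rule has_walk_parity[OF _ that]) (rule even)
  define rep where "rep v = (SOME u. \<exists>n. has_walk E ends u v n)" for v
  have rep: "\<exists>n. has_walk E ends (rep v) v n" for v
    unfolding rep_def by (rule someI_ex) (blast intro: has_walk_refl)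
  define A where "A = {v \<in> V. \<exists>n. even n \<and> has_walk E ends (rep v) v n}"
  have "(fst (ends e) \<in> A) \<noteq> (snd (ends e) \<in> A)" if e: "e \<in> E" for e
  proof -
    define x y where "x = fst (ends e)" and "y = snd (ends e)"
    have "x \<in> V" "y \<in> V" using G e by (auto simp: graph_def x_def y_def)
    have xy: "has_walk E ends x y 1" using e by (intro has_walk_edge[OF e]) (simp add: x_def y_def)
    have "(\<exists>n. has_walk E ends u y n) \<longleftrightarrow> (\<exists>n. has_walk E ends u x n)" for u
      using has_walk_append[OF _ xy, of u] has_walk_append[OF _ has_walk_rev[OF xy], of u] by blast
    then have "rep y = rep x" by (simp add: rep_def)
    obtain n where n: "has_walk E ends (rep x) x n" using rep by blast
    have n1: "has_walk E ends (rep y) y (n + 1)"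
      unfolding \<open>rep y = rep x\<close> by (rule has_walk_append[OF n xy])
    have "x \<in> A \<longleftrightarrow> (\<exists>m. even m \<and> has_walk E ends (rep x) x m)" using \<open>x \<in> V\<close> by (simp add: A_def)
    also have "\<dots> \<longleftrightarrow> even n" using n parity[OF n] by blast
    finally have x_in: "x \<in> A \<longleftrightarrow> even n" .
    have "y \<in> A \<longleftrightarrow> (\<exists>m. even m \<and> has_walk E ends (rep y) y m)" using \<open>y \<in> V\<close> by (simp add: A_def)
    also have "\<dots> \<longleftrightarrow> even (n + 1)" using n1 parity[OF n1] by blast
    finally have y_in: "y \<in> A \<longleftrightarrow> even (n + 1)" .
    show ?thesis using x_in y_in by (simp add: x_def y_def)
  qed
  then have "bipartite V E ends" unfolding bipartite_def by (intro exI[of _ A]) (auto simp: A_def)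
  then show False using nb by simp
qed

lemma closed_walk_repeated_edge:
  assumes w: "walk E ends vs es n" and closed: "vs n = vs 0" and inj: "inj_on vs {..<n}"
    and ij: "i < j" "j < n" and eq: "es i = es j"
  shows "n = 2"
proof -
  have "ends (es i) = (vs i, vs (Suc i)) \<or> ends (es i) = (vs (Suc i), vs i)"
    "ends (es j) = (vs j, vs (Suc j)) \<or> ends (es j) = (vs (Suc j), vs j)"
    using w ij unfolding walk_def by auto
  moreover have "vs i \<noteq> vs j" using inj ij by (auto dest: inj_onD)
  ultimately have c: "vs i = vs (Suc j)" "vs (Suc i) = vs j" using eq by auto
  have "Suc j = n"
  proof (rule ccontr)
    assume "Suc j \<noteq> n"
    then have "i = Suc j" using c(1) inj ij by (auto dest: inj_onD)
    then show False using ij by simp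
  qed
  then have "i = 0" using c(1) closed inj ij by (auto dest: inj_onD)
  then have "j = Suc 0" using c(2) inj ij \<open>Suc j = n\<close> by (auto dest: inj_onD)
  then show ?thesis using \<open>Suc j = n\<close> by simp
qed

lemma simple_closed_walk_has_cycle:
  assumes w: "walk E ends vs es n" and closed: "vs n = vs 0" and inj: "inj_on vs {..<n}"
    and n: "odd n"
  shows "has_cycle E ends n"
  unfolding has_cycle_def
proof (intro conjI exI)
  show "1 \<le> n" using n by (cases n) auto
  show "inj_on vs {..<n}" by (rule inj)
  show "inj_on es {..<n}"
  proof (rule inj_onI, rule ccontr)
    fix a b assume ab: "a \<in> {..<n}" "b \<in> {..<n}" "es a = es b" "a \<noteq> b"
    then have "n = 2"
      using closed_walk_repeated_edge[OF w closed inj, of a b] closed_walk_repeated_edge[OF w closed inj, of b a]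
      by (cases "a < b") auto
    then show False using n by simp
  qed
  have "vs (Suc i mod n) = vs (Suc i)" if "i < n" for i
    using that closed by (cases "Suc i = n") auto
  then show "\<forall>i<n. es i \<in> E \<and>
      (ends (es i) = (vs i, vs (Suc i mod n)) \<or> ends (es i) = (vs (Suc i mod n), vs i))"
    using w unfolding walk_def by simp
qed

lemma odd_closed_walk_odd_cycle:
  "has_walk E ends x x n \<Longrightarrow> odd n \<Longrightarrow> \<exists>k. odd k \<and> has_cycle E ends k"
proof (induction n arbitrary: x rule: less_induct)
  case (less n)
  obtain vs es where w: "walk E ends vs es n" "vs 0 = x" "vs n = x"
    using less.prems(1) unfolding has_walk_def by blast
  show ?case
  proof (cases "inj_on vs {..<n}")
    case True
    then show ?thesis using simple_closed_walk_has_cycle[OF w(1) _ True less.prems(2)] w less.prems(2) by auto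
  next
    case False
    then obtain i j where ij: "i < j" "j < n" "vs i = vs j"
      unfolding inj_on_def by (metis lessThan_iff linorder_neqE_nat)
    have "has_walk E ends (vs i) (vs i) (j - i)"
      using walk_has_walk_between[OF w(1), of i j] ij by simp
    moreover have "has_walk E ends (vs i) (vs i) (n - j + i)"
    proof -
      have "has_walk E ends (vs j) (vs n) (n - j)" "has_walk E ends (vs 0) (vs i) i"
        using walk_has_walk_between[OF w(1), of j n] walk_has_walk_between[OF w(1), of 0 i] ij by simp_all
      then show ?thesis using has_walk_append[of E ends "vs j" "vs n" "n - j" "vs i" i] w(2,3) ij(3) by simp
    qed
    moreover have "odd (j - i) \<or> odd (n - j + i)" using less.prems(2) ij by presburger
    moreover have "j - i < n" "n - j + i < n" using ij by auto
    ultimately show ?thesis using less.IH by blast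
  qed
qed

lemma odd_girth_odd_cycle:
  assumes "graph V E ends" "\<not> bipartite V E ends"
  shows "odd (odd_girth E ends) \<and> has_cycle E ends (odd_girth E ends)"
proof -
  obtain x n where "odd n" "has_walk E ends x x n"
    using not_bipartite_odd_closed_walk[OF assms] by blast
  then have "\<exists>k. odd k \<and> has_cycle E ends k" by (rule odd_closed_walk_odd_cycle[rotated])
  then show ?thesis unfolding odd_girth_def by (rule LeastI_ex)
qed

section \<open>Nowhere-zero flows of bridgeless graphs\<close>

definition net_flow :: "'e set \<Rightarrow> ('e \<Rightarrow> 'v \<times> 'v) \<Rightarrow> ('e \<Rightarrow> real) \<Rightarrow> 'v \<Rightarrow> real" where
  "net_flow E ends P v = (\<Sum>e\<in>{e\<in>E. snd (ends e) = v}. P e) - (\<Sum>e\<in>{e\<in>E. fst (ends e) = v}. P e)"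

lemma net_flow_add: "net_flow E ends (\<lambda>e. P e + Q e) v = net_flow E ends P v + net_flow E ends Q v"
  by (simp add: net_flow_def sum.distrib)

lemma net_flow_diff: "net_flow E ends (\<lambda>e. P e - Q e) v = net_flow E ends P v - net_flow E ends Q v"
  by (simp add: net_flow_def sum_subtractf)

lemma net_flow_cmult: "net_flow E ends (\<lambda>e. c * P e) v = c * net_flow E ends P v"
  by (simp add: net_flow_def sum_distrib_left right_diff_distrib)

lemma net_flow_zero: "net_flow E ends (\<lambda>e. 0) v = 0"
  by (simp add: net_flow_def)

lemma net_flow_indicator:
  assumes "finite E" "e0 \<in> E"
  shows "net_flow E ends (\<lambda>e. if e = e0 then 1 else 0) v
       = (if snd (ends e0) = v then 1 else 0) - (if fst (ends e0) = v then 1 else 0)"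
  using assms by (simp add: net_flow_def sum.delta')

lemma path_unit_flow:
  assumes fin: "finite E" and p: "(x, y) \<in> (adj (E - {e0}) ends)\<^sup>*"
  shows "\<exists>P. P e0 = 0 \<and> (\<forall>v. net_flow E ends P v = (if y = v then 1 else 0) - (if x = v then 1 else 0))"
  using p
proof (induction rule: rtrancl_induct)
  case base
  show ?case by (rule exI[of _ "\<lambda>e. 0"]) (simp add: net_flow_zero)
next
  case (step y z)
  then obtain P where P: "P e0 = 0" "\<forall>v. net_flow E ends P v = (if y = v then 1 else 0) - (if x = v then 1 else 0)"
    by blast
  from step(2) obtain e where e: "e \<in> E" "e \<noteq> e0" "ends e = (y, z) \<or> ends e = (z, y)"
    unfolding adj_def by blast
  show ?case
  proof (cases "ends e = (y, z)")
    case True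
    define P' where "P' e' = P e' + (if e' = e then 1 else 0)" for e'
    have "net_flow E ends P' v = (if z = v then 1 else 0) - (if x = v then 1 else 0)" for v
      unfolding P'_def net_flow_add net_flow_indicator[OF fin e(1)] using P(2) True by auto
    moreover have "P' e0 = 0" using P e by (simp add: P'_def)
    ultimately show ?thesis by blast
  next
    case False
    then have F: "ends e = (z, y)" using e by simp
    define P' where "P' e' = P e' - (if e' = e then 1 else 0)" for e'
    have "net_flow E ends P' v = (if z = v then 1 else 0) - (if x = v then 1 else 0)" for v
      unfolding P'_def net_flow_diff net_flow_indicator[OF fin e(1)] using P(2) F by auto
    moreover have "P' e0 = 0" using P e by (simp add: P'_def)
    ultimately show ?thesis by blast
  qed
qed

lemma circulation_through_edge:
  assumes G: "graph V E ends" and bl: "bridgeless E ends" and e0: "e0 \<in> E"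
  shows "\<exists>C. C e0 = 1 \<and> (\<forall>v. net_flow E ends C v = 0)"
proof -
  have fin: "finite E" using G by (simp add: graph_def)
  have "\<not> is_bridge E ends e0" using bl e0 by (simp add: bridgeless_def)
  then have "ends e0 \<in> (adj (E - {e0}) ends)\<^sup>*" using e0 by (simp add: is_bridge_def)
  then have "(fst (ends e0), snd (ends e0)) \<in> (adj (E - {e0}) ends)\<^sup>*" by simp
  from path_unit_flow[OF fin this] obtain P where P: "P e0 = 0"
    "\<forall>v. net_flow E ends P v = (if snd (ends e0) = v then 1 else 0) - (if fst (ends e0) = v then 1 else 0)"
    by blast
  define C where "C = (\<lambda>e. (if e = e0 then 1 else 0) - P e)"
  have "net_flow E ends C v = 0" for v
    unfolding C_def net_flow_diff net_flow_indicator[OF fin e0] using P(2) by simp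
  moreover have "C e0 = 1" using P by (simp add: C_def)
  ultimately show ?thesis by blast
qed

(* Adding a multiple of a circulation through the next edge keeps the earlier values nonzero
   for all but finitely many multipliers. *)
lemma nowhere_zero_circulation:
  assumes G: "graph V E ends" and bl: "bridgeless E ends"
  shows "\<exists>F. (\<forall>v. net_flow E ends F v = 0) \<and> (\<forall>e\<in>E. F e \<noteq> 0)"
proof -
  have fin: "finite E" using G by (simp add: graph_def)
  have "D \<subseteq> E \<Longrightarrow> \<exists>F. (\<forall>v. net_flow E ends F v = 0) \<and> (\<forall>e\<in>D. F e \<noteq> 0)" for D
  proof (induction D rule: infinite_finite_induct)
    case (infinite D)
    then have False using fin finite_subset by blast
    then show ?case ..
  next
    case empty
    show ?case by (rule exI[of _ "\<lambda>e. 0"]) (simp add: net_flow_zero)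
  next
    case (insert e D)
    then obtain F where F: "\<forall>v. net_flow E ends F v = 0" "\<forall>e\<in>D. F e \<noteq> 0" by blast
    have eE: "e \<in> E" using insert by simp
    obtain C where C: "C e = 1" "\<forall>v. net_flow E ends C v = 0" using circulation_through_edge[OF G bl eE] by blast
    define Bad where "Bad = (\<lambda>e'. - F e' / C e') ` insert e D"
    have "finite Bad" using insert by (simp add: Bad_def)
    then obtain t where t: "t \<notin> Bad" using ex_new_if_finite[OF infinite_UNIV_char_0] by blast
    define F' where "F' = (\<lambda>e'. F e' + t * C e')"
    have "net_flow E ends F' v = 0" for v unfolding F'_def net_flow_add net_flow_cmult using F C by simp
    moreover have "F' e' \<noteq> 0" if e': "e' \<in> insert e D" for e'
    proof (cases "C e' = 0")
      case True
      then have "e' \<noteq> e" using C by auto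
      then have "e' \<in> D" using e' by simp
      then show ?thesis using F True by (simp add: F'_def)
    next
      case False
      show ?thesis
      proof
        assume "F' e' = 0"
        then have "t = - F e' / C e'" using False by (simp add: F'_def field_simps)
        then have "t \<in> Bad" using e' by (auto simp: Bad_def)
        then show False using t by simp
      qed
    qed
    ultimately show ?case by blast
  qed
  then show ?thesis by blast
qed

lemma complex_nz_flow_of_circulation:
  assumes fin: "finite E" and ne: "E \<noteq> {}"
    and F: "\<forall>v. net_flow E ends F v = 0" "\<forall>e\<in>E. F e \<noteq> 0"
  defines "m \<equiv> Min ((\<lambda>e. \<bar>F e\<bar>) ` E)" and "M \<equiv> Max ((\<lambda>e. \<bar>F e\<bar>) ` E)"
  shows "2 \<le> M / m + 1"
    and "complex_nz_flow V E ends (M / m + 1) (\<lambda>_. True) (\<lambda>e. of_real (F e / m))"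
proof -
  have mle: "m \<le> \<bar>F e\<bar>" and Mge: "\<bar>F e\<bar> \<le> M" if "e \<in> E" for e
    using fin that by (simp_all add: m_def M_def)
  have "m \<in> (\<lambda>e. \<bar>F e\<bar>) ` E" unfolding m_def using fin ne by (intro Min_in) auto
  then have m0: "0 < m" using F(2) by auto
  obtain e1 where "e1 \<in> E" using ne by blast
  then have "1 \<le> M / m" using mle Mge m0 by (simp add: le_divide_eq) (meson order_trans)
  then show "2 \<le> M / m + 1" by simp
  show "complex_nz_flow V E ends (M / m + 1) (\<lambda>_. True) (\<lambda>e. of_real (F e / m))"
    unfolding complex_nz_flow_def
  proof (intro conjI ballI)
    fix e assume e: "e \<in> E"
    have nm: "cmod (of_real (F e / m)) = \<bar>F e\<bar> / m" using m0 by (simp only: norm_of_real abs_divide abs_of_pos)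
    show "1 \<le> cmod (of_real (F e / m))" unfolding nm using mle[OF e] m0 by simp
    show "cmod (of_real (F e / m)) \<le> M / m + 1 - 1" unfolding nm using Mge[OF e] m0 by (simp add: divide_right_mono)
  next
    fix v
    have "(\<Sum>e\<in>{e\<in>E. snd (ends e) = v}. F e) = (\<Sum>e\<in>{e\<in>E. fst (ends e) = v}. F e)"
      using F(1) by (simp add: net_flow_def)
    then have "(\<Sum>e\<in>{e\<in>E. snd (ends e) = v}. of_real (F e / m)) = (\<Sum>e\<in>{e\<in>E. fst (ends e) = v}. complex_of_real (F e / m))"
      by (simp flip: sum_divide_distrib of_real_sum)
    then show "(\<Sum>e\<in>{e\<in>E. head ends (\<lambda>_. True) e = v}. of_real (F e / m))
        = (\<Sum>e\<in>{e\<in>E. tail ends (\<lambda>_. True) e = v}. complex_of_real (F e / m))"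
      by (simp add: head_def tail_def)
  qed
qed

lemma bridgeless_complex_nz_flow:
  assumes G: "graph V E ends" and bl: "bridgeless E ends"
  shows "\<exists>r ori \<phi>. 2 \<le> r \<and> complex_nz_flow V E ends r ori \<phi>"
proof (cases "E = {}")
  case True
  then have "complex_nz_flow V E ends 2 (\<lambda>_. True) (\<lambda>_. 0)" by (simp add: complex_nz_flow_def)
  then show ?thesis by force
next
  case False
  have "finite E" using G by (simp add: graph_def)
  moreover obtain F where "\<forall>v. net_flow E ends F v = 0" "\<forall>e\<in>E. F e \<noteq> 0"
    using nowhere_zero_circulation[OF G bl] by blast
  ultimately show ?thesis using complex_nz_flow_of_circulation[OF _ False] by blast
qed

(* Bridgelessness is needed only to make the infimum range over a nonempty set. *)
lemma complex_flow_number_lower_bound: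
  assumes "graph V E ends" "bridgeless E ends"
    and "\<And>r ori \<phi>. 2 \<le> r \<Longrightarrow> complex_nz_flow V E ends r ori \<phi> \<Longrightarrow> c \<le> r"
  shows "c \<le> complex_flow_number V E ends"
  unfolding complex_flow_number_def
  using bridgeless_complex_nz_flow[OF assms(1,2)] assms(3) by (intro cInf_greatest) auto

section \<open>Flows along a cycle of a cubic graph\<close>

lemma cubic_third_edge:
  assumes cub: "cubic V E ends"
    and e1: "e1 \<in> E" "ends e1 = (v, u1) \<or> ends e1 = (u1, v)" "u1 \<noteq> v"
    and e2: "e2 \<in> E" "ends e2 = (v, u2) \<or> ends e2 = (u2, v)" "u2 \<noteq> v"
    and "e1 \<noteq> e2"
  obtains e3 where "e3 \<notin> {e1, e2}" "{e \<in> E. fst (ends e) = v \<or> snd (ends e) = v} = {e1, e2, e3}"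
    and "\<forall>e\<in>E. \<not> (fst (ends e) = v \<and> snd (ends e) = v)"
proof -
  define Fs Sn where "Fs = {e \<in> E. fst (ends e) = v}" and "Sn = {e \<in> E. snd (ends e) = v}"
  have G: "graph V E ends" using cub by (simp add: cubic_def)
  then have fin: "finite Fs" "finite Sn" by (simp_all add: graph_def Fs_def Sn_def)
  have "v \<in> V" using G e1 by (auto simp: graph_def)
  then have deg: "card Fs + card Sn = 3" using cub by (simp add: cubic_def degree_def Fs_def Sn_def)
  have "e \<in> Fs \<union> Sn \<and> e \<notin> Fs \<inter> Sn" if "e \<in> E" "ends e = (v, u) \<or> ends e = (u, v)" "u \<noteq> v" for e u
    using that by (cases "ends e") (auto simp: Fs_def Sn_def)
  then have in_union: "e1 \<in> Fs \<union> Sn" "e2 \<in> Fs \<union> Sn" and not_loop: "e1 \<notin> Fs \<inter> Sn" "e2 \<notin> Fs \<inter> Sn"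
    using e1 e2 by blast+
  have card_union: "card Fs + card Sn = card (Fs \<union> Sn) + card (Fs \<inter> Sn)"
    using fin by (rule card_Un_Int)
  have no_loop: "Fs \<inter> Sn = {}"
  proof (rule ccontr)
    assume "Fs \<inter> Sn \<noteq> {}"
    then obtain e where e: "e \<in> Fs \<inter> Sn" by blast
    then have "e \<noteq> e1" "e \<noteq> e2" using not_loop by auto
    then have "card {e1, e2, e} = 3" using \<open>e1 \<noteq> e2\<close> by simp
    moreover have "{e1, e2, e} \<subseteq> Fs \<union> Sn" using in_union e by auto
    ultimately have "3 \<le> card (Fs \<union> Sn)" using fin by (metis card_mono finite_UnI)
    moreover have "1 \<le> card (Fs \<inter> Sn)" using e fin by (metis One_nat_def Suc_leI card_gt_0_iff empty_iff finite_Int)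
    ultimately show False using card_union deg by simp
  qed
  then have "card (Fs \<union> Sn - {e1, e2}) = 1"
    using card_union deg in_union \<open>e1 \<noteq> e2\<close> fin by (simp add: card_Diff_subset)
  then obtain e3 where e3: "Fs \<union> Sn - {e1, e2} = {e3}" by (rule card_1_singletonE)
  show ?thesis
  proof
    show "e3 \<notin> {e1, e2}" using e3 by auto
    show "{e \<in> E. fst (ends e) = v \<or> snd (ends e) = v} = {e1, e2, e3}"
      using e3 in_union by (auto simp: Fs_def Sn_def)
    show "\<forall>e\<in>E. \<not> (fst (ends e) = v \<and> snd (ends e) = v)"
      using no_loop by (auto simp: Fs_def Sn_def)
  qed
qed

lemma complex_nz_flow_incident_sum:
  assumes fl: "complex_nz_flow V E ends r ori \<phi>" and v: "v \<in> V" and fin: "finite E"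
    and no_loop: "\<forall>e\<in>E. \<not> (fst (ends e) = v \<and> snd (ends e) = v)"
  shows "(\<Sum>e\<in>{e \<in> E. fst (ends e) = v \<or> snd (ends e) = v}.
           if head ends ori e = v then \<phi> e else - \<phi> e) = 0"
proof -
  define I where "I = {e \<in> E. fst (ends e) = v \<or> snd (ends e) = v}"
  have "I \<inter> {e. head ends ori e = v} = {e \<in> E. head ends ori e = v}"
    by (auto simp: I_def head_def split: if_splits)
  moreover have "I \<inter> - {e. head ends ori e = v} = {e \<in> E. tail ends ori e = v}"
    using no_loop by (auto simp: I_def head_def tail_def split: if_splits)
  moreover have "finite I" using fin by (simp add: I_def)
  ultimately have "(\<Sum>e\<in>I. if head ends ori e = v then \<phi> e else - \<phi> e)
      = (\<Sum>e\<in>{e \<in> E. head ends ori e = v}. \<phi> e) - (\<Sum>e\<in>{e \<in> E. tail ends ori e = v}. \<phi> e)"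
    by (simp add: sum.If_cases sum_negf)
  also have "\<dots> = 0" using fl v by (simp add: complex_nz_flow_def)
  finally show ?thesis by (simp add: I_def)
qed

lemma cubic_cycle_flow_step:
  assumes cub: "cubic V E ends" and fl: "complex_nz_flow V E ends r ori \<phi>"
    and vs: "inj_on vs {..<g}" and es: "inj_on es {..<g}" and g: "3 \<le> g"
    and cyc: "\<forall>i<g. es i \<in> E \<and>
        (ends (es i) = (vs i, vs (Suc i mod g)) \<or> ends (es i) = (vs (Suc i mod g), vs i))"
    and k: "k < g"
  defines "f i \<equiv> if tail ends ori (es i) = vs i then \<phi> (es i) else - \<phi> (es i)"
  shows "\<exists>e\<in>E. cmod (f (Suc k mod g) - f k) = cmod (\<phi> e)"
proof -
  define j l where "j = Suc k mod g" and "l = Suc j mod g"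
  have next_ne: "Suc a mod g \<noteq> a" if "a < g" for a
    using that g by (cases "Suc a = g") auto
  have j: "j < g" "j \<noteq> k" and l: "l < g" "l \<noteq> j"
    using k g next_ne[OF k] next_ne[of j] by (simp_all add: j_def l_def)
  define v where "v = vs j"
  have ne: "es k \<noteq> es j" "vs k \<noteq> v" "vs l \<noteq> v"
    using k j l by (simp_all add: v_def inj_on_eq_iff[OF es] inj_on_eq_iff[OF vs])
  have ek: "es k \<in> E" "ends (es k) = (v, vs k) \<or> ends (es k) = (vs k, v)"
    using cyc[rule_format, OF k] by (auto simp: v_def j_def)
  have ej: "es j \<in> E" "ends (es j) = (v, vs l) \<or> ends (es j) = (vs l, v)"
    using cyc[rule_format, OF j(1)] by (auto simp: v_def l_def)
  obtain e3 where e3: "e3 \<notin> {es k, es j}"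
      "{e \<in> E. fst (ends e) = v \<or> snd (ends e) = v} = {es k, es j, e3}"
      "\<forall>e\<in>E. \<not> (fst (ends e) = v \<and> snd (ends e) = v)"
    by (rule cubic_third_edge[OF cub ek(1,2) ne(2) ej(1,2) ne(3) ne(1)])
  define \<sigma> where "\<sigma> e = (if head ends ori e = v then \<phi> e else - \<phi> e)" for e
  have "v \<in> V" using cub ek unfolding cubic_def graph_def by force
  moreover have "finite E" using cub by (simp add: cubic_def graph_def)
  ultimately have "(\<Sum>e\<in>{es k, es j, e3}. \<sigma> e) = 0"
    using complex_nz_flow_incident_sum[OF fl _ _ e3(3)] e3(2) by (simp add: \<sigma>_def)
  moreover have "es k \<noteq> e3" "es j \<noteq> e3" using e3(1) by auto
  ultimately have "\<sigma> (es k) + \<sigma> (es j) + \<sigma> e3 = 0"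
    using ne(1) by (simp add: add.assoc)
  moreover have "\<sigma> (es k) = f k" "\<sigma> (es j) = - f j"
    using ek(2) ej(2) ne(2,3)
    by (auto simp: \<sigma>_def f_def v_def head_def tail_def)
  ultimately have "f j - f k = \<sigma> e3" by (simp add: algebra_simps)
  moreover have "e3 \<in> E" using e3(2) by blast
  ultimately show ?thesis by (auto simp: \<sigma>_def j_def)
qed

lemma cubic_cycle_annular_polygon:
  assumes cub: "cubic V E ends" and fl: "complex_nz_flow V E ends r ori \<phi>"
    and cycle: "has_cycle E ends g" and g: "3 \<le> g"
  shows "\<exists>f. annular_polygon (r - 1) g f"
proof -
  obtain vs es where vs: "inj_on vs {..<g}" and es: "inj_on es {..<g}"
    and cyc: "\<forall>i<g. es i \<in> E \<and>
        (ends (es i) = (vs i, vs (Suc i mod g)) \<or> ends (es i) = (vs (Suc i mod g), vs i))"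
    using cycle unfolding has_cycle_def by blast
  define f where "f i = (if tail ends ori (es i) = vs i then \<phi> (es i) else - \<phi> (es i))" for i
  have bounds: "1 \<le> cmod (\<phi> e) \<and> cmod (\<phi> e) \<le> r - 1" if "e \<in> E" for e
    using fl that by (simp add: complex_nz_flow_def)
  have "annular_polygon (r - 1) g (\<lambda>i. f (i mod g))"
    unfolding annular_polygon_def
  proof (intro conjI allI)
    fix i
    have "i mod g < g" using g by simp
    then show "1 \<le> cmod (f (i mod g))" "cmod (f (i mod g)) \<le> r - 1"
      using bounds cyc by (auto simp: f_def)
    obtain e where "e \<in> E" "cmod (f (Suc (i mod g) mod g) - f (i mod g)) = cmod (\<phi> e)"
      using cubic_cycle_flow_step[OF cub fl vs es g cyc \<open>i mod g < g\<close>] by (auto simp: f_def)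
    then show "1 \<le> cmod (f (Suc i mod g) - f (i mod g))" "cmod (f (Suc i mod g) - f (i mod g)) \<le> r - 1"
      using bounds by (simp_all add: mod_Suc_eq)
  qed simp
  then show ?thesis by blast
qed

theorem theorem2:
  fixes V :: "'v set" and E :: "'e set" and ends :: "'e \<Rightarrow> 'v \<times> 'v"
  assumes "cubic V E ends"
    and "bridgeless E ends"
    and "\<not> bipartite V E ends"
  defines "g \<equiv> odd_girth E ends"
  shows "(g mod 6 = 1 \<or> g mod 6 = 3 \<longrightarrow>
           complex_flow_number V E ends \<ge> 1 + 2 * sin (pi / 6 * (real g / (real g - 1))))
       \<and> (g mod 6 = 5 \<longrightarrow>
           complex_flow_number V E ends \<ge> 1 + 2 * sin (pi / 6 * ((real g + 1) / real g)))"
proof -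
  have G: "graph V E ends" using assms(1) by (simp add: cubic_def)
  have g: "odd g" "has_cycle E ends g"
    using odd_girth_odd_cycle[OF G assms(3)] by (simp_all add: g_def)
  have flow_bound: "(g mod 6 = 1 \<or> g mod 6 = 3 \<longrightarrow> 1 + 2 * sin (pi / 6 * (real g / (real g - 1))) \<le> r)
      \<and> (g mod 6 = 5 \<longrightarrow> 1 + 2 * sin (pi / 6 * ((real g + 1) / real g)) \<le> r)"
    if r: "2 \<le> r" and flow: "complex_nz_flow V E ends r ori \<phi>" for r ori \<phi>
  proof (cases "g = 1")
    case True
    (* A loop; the first bound is then 1 + 2 sin 0, as division by 0 gives 0. *)
    then show ?thesis using r by simp
  next
    case False
    with g have "3 \<le> g" by (auto simp: has_cycle_def elim: oddE)
    then obtain f where "annular_polygon (r - 1) g f"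
      using cubic_cycle_annular_polygon[OF assms(1) flow g(2)] by blast
    then show ?thesis
      using annular_polygon_bound_mod6_1_3 annular_polygon_bound_odd g(1) \<open>3 \<le> g\<close> by force
  qed
  show ?thesis
    using complex_flow_number_lower_bound[OF G assms(2)] flow_bound by (simp add: le_diff_eq)
qed

end
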